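(* Suppose (A1) and (A2) hold, and fix $\tau>0$. (a) For all $x,y\in X$: $\lim_{r\downarrow1}(r-1)\int_0^{2\pi}\|R(re^{i\theta},T(\tau))x\|^2d\theta=0$ and $\lim_{r\downarrow1}(r-1)\int_0^{2\pi}\|R(re^{i\theta},T(\tau)^* )y\|^2d\theta=0$. (b) Let $0<\delta\le\alpha/2$. For all $x\in\mathcal D^\delta$ and $y\in\mathcal D^\delta_*$: $\lim_{r\downarrow1}\Lambda_{\delta/\alpha}(r)\int_0^{2\pi}\|R(re^{i\theta},T(\tau))x\|^2d\theta=0$ and $\lim_{r\downarrow1}\Lambda_{\delta/\alpha}(r)\int_0^{2\pi}\|R(re^{i\theta},T(\tau)^* )y\|^2d\theta=0$.
   Context: $X$ is a complex Hilbert space; $A$ is a Riesz-spectral operator (simple distinct eigenvalues $(\lambda_n)$ with finitely many accumulation points, Riesz basis of eigenvectors $(\phi_n)$, biorthogonal eigenvectors $(\psi_n)$ of $A^*$), generating $T(t)x=\sum_ne^{t\lambda_n}\langle x,\psi_n\rangle\phi_n$. $\mathcal D^{\delta}=\{x:\sum_n|\lambda_n|^{2\delta}|\langle x,\psi_n\rangle|^2<\infty\}$, $\mathcal D^{\delta}_*=\{x:\sum_n|\lambda_n|^{2\delta}|\langle x,\phi_n\rangle|^2<\infty\}$. (A1): there exist $\omega,\alpha,\Upsilon>0$ such that only finitely many $\lambda_n$ lie in $\{\mathrm{Re}\,\lambda>-\omega\}\cap(\mathbb C\setminus\Omega_{\alpha,\Upsilon})$, where $\Omega_{\alpha,\Upsilon}=\{\lambda\in\mathbb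 C\setminus\mathbb R:\mathrm{Re}\,\lambda\le-\Upsilon/|\mathrm{Im}\,\lambda|^\alpha\}$; (A2): no $\lambda_n$ lies on $i\mathbb R$. For $0<s\le1/2$ and $r>1$: $\Lambda_s(r)=(r-1)^{1-2s}$ if $s<1/2$ and $\Lambda_{1/2}(r)=|\log(r-1)|^{-1}$. (Under (A1),(A2), $re^{i\theta}\in\rho(T(\tau))$ for $r>1$ close to 1.) *)

theory Defs
  imports "HOL-Analysis.Analysis"
begin

text \<open>HOL-Analysis only provides real inner product
spaces, so we introduce a type class: a real Banach space carrying a compatible
complex scalar multiplication and a complex inner product (linear in the first
argument, conjugate symmetric) inducing the norm.\<close>

class chilbert = real_normed_vector + complete_space +
  fixes scaleC :: "complex \<Rightarrow> 'a \<Rightarrow> 'a"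
    and cinner :: "'a \<Rightarrow> 'a \<Rightarrow> complex"
  assumes scaleC_add_right: "scaleC a (x + y) = scaleC a x + scaleC a y"
    and scaleC_add_left: "scaleC (a + b) x = scaleC a x + scaleC b x"
    and scaleC_scaleC: "scaleC a (scaleC b x) = scaleC (a * b) x"
    and scaleC_one: "scaleC 1 x = x"
    and scaleR_scaleC: "scaleR r x = scaleC (complex_of_real r) x"
    and cinner_commute: "cinner x y = cnj (cinner y x)"
    and cinner_add_left: "cinner (x + y) z = cinner x z + cinner y z"
    and cinner_scaleC_left: "cinner (scaleC a x) y = a * cinner x y"
    and cinner_self: "cinner x x = complex_of_real ((norm x)\<^sup>2)"

definition riesz_basis :: "(nat \<Rightarrow> 'a::chilbert) \<Rightarrow> bool" where
  "riesz_basis \<phi> \<longleftrightarrow>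
     closure {(\<Sum>n\<in>F. scaleC (c n) (\<phi> n)) | F c. finite F} = UNIV \<and>
     (\<exists>m M. 0 < m \<and> 0 < M \<and>
        (\<forall>N (c :: nat \<Rightarrow> complex).
           m * (\<Sum>n<N. (cmod (c n))\<^sup>2) \<le> (norm (\<Sum>n<N. scaleC (c n) (\<phi> n)))\<^sup>2 \<and>
           (norm (\<Sum>n<N. scaleC (c n) (\<phi> n)))\<^sup>2 \<le> M * (\<Sum>n<N. (cmod (c n))\<^sup>2)))"

definition biorthogonal :: "(nat \<Rightarrow> 'a::chilbert) \<Rightarrow> (nat \<Rightarrow> 'a) \<Rightarrow> bool" where
  "biorthogonal \<phi> \<psi> \<longleftrightarrow> (\<forall>n k. cinner (\<phi> n) (\<psi> k) = (if n = k then 1 else 0))"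

text \<open>Spectral data of a Riesz-spectral operator A: simple distinct eigenvalues
with finitely many accumulation points, a Riesz basis of eigenvectors \<phi>, and the
biorthogonal sequence \<psi> (eigenvectors of A^*).  A is
A x = \<Sum> \<lambda>_n \<langle>x,\<psi>_n\<rangle> \<phi>_n.\<close>

definition riesz_spectral :: "(nat \<Rightarrow> complex) \<Rightarrow> (nat \<Rightarrow> 'a::chilbert) \<Rightarrow> (nat \<Rightarrow> 'a) \<Rightarrow> bool" where
  "riesz_spectral lam \<phi> \<psi> \<longleftrightarrow>
     inj lam \<and> finite {z. z islimpt range lam} \<and> riesz_basis \<phi> \<and> biorthogonal \<phi> \<psi>"

definition rs_semigroup :: "(nat \<Rightarrow> complex) \<Rightarrow> (nat \<Rightarrow> 'a::chilbert) \<Rightarrow> (nat \<Rightarrow> 'a) \<Rightarrow> real \<Rightarrow> 'a \<Rightarrow> 'a" where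
  "rs_semigroup lam \<phi> \<psi> t x = (\<Sum>n. scaleC (exp (complex_of_real t * lam n) * cinner x (\<psi> n)) (\<phi> n))"

definition hadjoint :: "('a::chilbert \<Rightarrow> 'a) \<Rightarrow> 'a \<Rightarrow> 'a" where
  "hadjoint S y = (THE z. \<forall>x. cinner (S x) y = cinner x z)"

definition resolvent :: "complex \<Rightarrow> ('a::chilbert \<Rightarrow> 'a) \<Rightarrow> 'a \<Rightarrow> 'a" where
  "resolvent \<mu> S x = (THE y. scaleC \<mu> y - S y = x)"

definition Dom_pow :: "real \<Rightarrow> (nat \<Rightarrow> complex) \<Rightarrow> (nat \<Rightarrow> 'a::chilbert) \<Rightarrow> 'a set" where
  "Dom_pow \<delta> lam \<psi> = {x. summable (\<lambda>n. cmod (lam n) powr (2 * \<delta>) * (cmod (cinner x (\<psi> n)))\<^sup>2)}"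

definition Omega :: "real \<Rightarrow> real \<Rightarrow> complex set" where
  "Omega \<alpha> \<Upsilon> = {z. Im z \<noteq> 0 \<and> Re z \<le> - \<Upsilon> / (\<bar>Im z\<bar> powr \<alpha>)}"

definition Lambda :: "real \<Rightarrow> real \<Rightarrow> real" where
  "Lambda s r = (if s < 1/2 then (r - 1) powr (1 - 2 * s) else 1 / \<bar>ln (r - 1)\<bar>)"

end

theory Submission
  imports Defs "HOL-Complex_Analysis.Complex_Analysis"
begin

(* In the Riesz basis phi, T(tau) is the diagonal operator with entries g_n = exp (tau lambda_n),
   and T(tau)^* is diagonal with entries cnj g_n in the biorthogonal basis psi.  The Riesz bounds
   give |R(mu, T(tau)) x|^2 <= M * sum_n |<x, psi_n>|^2 / |mu - g_n|^2, and Cauchy's formula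
   evaluates the integral of |r e^(i theta) - g_n|^-2 over a period as 2 pi / (r^2 - |g_n|^2) when
   |g_n| < 1.  By (A1) and (A2) only finitely many |g_n| exceed 1, and those stay away from the
   unit circle.  Hence r - 1 times each term stays bounded and tends to 0 as r -> 1+, and (a)
   follows by dominated convergence.  For (b), off a finite set (A1) gives
   -tau Re lambda_n >= tau Upsilon / |lambda_n|^alpha, and Young's inequality turns this into
   Lambda_{delta/alpha}(r) / (r - |g_n|) <= C |lambda_n|^(2 delta), which is summable against
   |<x, psi_n>|^2 exactly when x lies in D^delta. *)

section \<open>Complex inner product algebra\<close>

lemma cinner_scaleC_right: "cinner x (scaleC a y) = cnj a * cinner x y"
  by (metis cinner_commute cinner_scaleC_left complex_cnj_cnj complex_cnj_mult)

lemma cinner_add_right: "cinner x (y + z) = cinner x y + cinner x z"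
  by (metis cinner_commute cinner_add_left complex_cnj_add)

lemma cinner_zero_left [simp]: "cinner 0 y = 0"
  using cinner_add_left[of 0 0 y] by simp

lemma cinner_zero_right [simp]: "cinner x 0 = 0"
  using cinner_add_right[of x 0 0] by simp

lemma cinner_minus_left: "cinner (- x) y = - cinner x y"
  using cinner_add_left[of x "-x" y] by (simp add: eq_neg_iff_add_eq_0 add.commute)

lemma cinner_minus_right: "cinner x (- y) = - cinner x y"
  using cinner_add_right[of x y "-y"] by (simp add: eq_neg_iff_add_eq_0 add.commute)

lemma cinner_diff_left: "cinner (x - y) z = cinner x z - cinner y z"
  using cinner_add_left[of x "-y" z] cinner_minus_left by simp

lemma cinner_diff_right: "cinner x (y - z) = cinner x y - cinner x z"
  using cinner_add_right[of x y "-z"] cinner_minus_right by simp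

lemma cinner_scaleR_left: "cinner (scaleR r x) y = of_real r * cinner x y"
  by (simp add: scaleR_scaleC cinner_scaleC_left)

lemma cinner_sum_left: "cinner (\<Sum>i\<in>F. f i) y = (\<Sum>i\<in>F. cinner (f i) y)"
  by (induct F rule: infinite_finite_induct) (auto simp: cinner_add_left)

lemma cinner_sum_right: "cinner y (\<Sum>i\<in>F. f i) = (\<Sum>i\<in>F. cinner y (f i))"
  by (induct F rule: infinite_finite_induct) (auto simp: cinner_add_right)

lemma scaleC_zero_left [simp]: "scaleC 0 x = 0"
  using scaleC_add_left[of 0 0 x] by simp

lemma cinner_eq_zeroI: "(\<And>x. cinner x z = 0) \<Longrightarrow> z = 0"
  using cinner_self[of z] by simp

lemma Cauchy_Schwarz_cinner: "cmod (cinner x y) \<le> norm x * norm y"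
proof (cases "y = 0")
  case True thus ?thesis by simp
next
  case False
  hence ny: "norm y > 0" by simp
  define N where "N = complex_of_real ((norm y)\<^sup>2)"
  have N0: "N \<noteq> 0" using ny by (simp add: N_def)
  have yy: "cinner y y = N" unfolding N_def by (rule cinner_self)
  have yx: "cinner y x = cnj (cinner x y)" by (rule cinner_commute)
  define t where "t = cinner x y / N"
  \<comment> \<open>expand \<open>\<parallel>x - t y\<parallel>\<^sup>2 \<ge> 0\<close> for the orthogonal projection coefficient \<open>t\<close>\<close>
  have "cinner (x - scaleC t y) (x - scaleC t y)
        = cinner x x - cnj t * cinner x y - t * cinner y x + t * cnj t * cinner y y"
    by (simp add: cinner_diff_left cinner_diff_right cinner_scaleC_left cinner_scaleC_right
        algebra_simps)
  also have "\<dots> = cinner x x - cinner x y * cnj (cinner x y) / N"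
    unfolding yy yx t_def using N0 by (simp add: N_def field_simps)
  also have "\<dots> = complex_of_real ((norm x)\<^sup>2 - (cmod (cinner x y))\<^sup>2 / (norm y)\<^sup>2)"
    unfolding N_def
    by (simp only: cinner_self complex_norm_square[symmetric] of_real_diff of_real_divide)
  finally have "(norm (x - scaleC t y))\<^sup>2 = (norm x)\<^sup>2 - (cmod (cinner x y))\<^sup>2 / (norm y)\<^sup>2"
    by (simp only: cinner_self of_real_eq_iff)
  hence "0 \<le> (norm x)\<^sup>2 - (cmod (cinner x y))\<^sup>2 / (norm y)\<^sup>2"
    by (metis zero_le_power2)
  hence "(cmod (cinner x y))\<^sup>2 \<le> (norm x * norm y)\<^sup>2"
    using ny by (simp add: field_simps power_mult_distrib)
  thus ?thesis
    by (meson abs_le_square_iff abs_norm_cancel norm_ge_zero mult_nonneg_nonneg power2_le_imp_le)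
qed

lemma bounded_linear_cinner_left: "bounded_linear (\<lambda>x. cinner x y)"
  by (rule bounded_linear_intro[where K="norm y"])
     (auto simp: cinner_add_left cinner_scaleR_left scaleR_conv_of_real Cauchy_Schwarz_cinner)

lemma bounded_linear_cinner_right: "bounded_linear (\<lambda>x. cinner y x)"
proof (rule bounded_linear_intro[where K="norm y"])
  show "norm (cinner y x) \<le> norm x * norm y" for x
    using Cauchy_Schwarz_cinner[of y x] by (simp add: mult.commute)
qed (auto simp: cinner_add_right scaleR_scaleC cinner_scaleC_right scaleR_conv_of_real)

lemma cinner_suminf_left: "summable f \<Longrightarrow> cinner (suminf f) y = (\<Sum>n. cinner (f n) y)"
  using bounded_linear.suminf[OF bounded_linear_cinner_left] by metis

lemma cinner_suminf_right: "summable f \<Longrightarrow> cinner y (suminf f) = (\<Sum>n. cinner y (f n))"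
  using bounded_linear.suminf[OF bounded_linear_cinner_right] by metis

lemma continuous_on_cinner_left [continuous_intros]:
  "continuous_on S f \<Longrightarrow> continuous_on S (\<lambda>x. cinner (f x) y)"
  using bounded_linear.continuous_on[OF bounded_linear_cinner_left] by blast

context chilbert begin
subclass banach ..
end

section \<open>Riesz systems\<close>

text \<open>What the argument uses of a Riesz basis \<open>\<phi>\<close> with biorthogonal sequence \<open>\<psi>\<close>;
  \<open>m\<close> and \<open>M\<close> are the lower and upper Riesz bounds.\<close>

definition riesz_system :: "(nat \<Rightarrow> 'a::chilbert) \<Rightarrow> (nat \<Rightarrow> 'a) \<Rightarrow> real \<Rightarrow> real \<Rightarrow> bool" where
  "riesz_system \<phi> \<psi> m M \<longleftrightarrow> 0 < m \<and> 0 < M \<and> biorthogonal \<phi> \<psi> \<and>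
     (\<forall>x. summable (\<lambda>n. (cmod (cinner x (\<psi> n)))\<^sup>2) \<and>
          m * (\<Sum>n. (cmod (cinner x (\<psi> n)))\<^sup>2) \<le> (norm x)\<^sup>2) \<and>
     (\<forall>c a b. (norm (\<Sum>n\<in>{a..<b}. scaleC (c n) (\<phi> n)))\<^sup>2 \<le> M * (\<Sum>n\<in>{a..<b}. (cmod (c n))\<^sup>2)) \<and>
     (\<forall>x. (\<lambda>n. scaleC (cinner x (\<psi> n)) (\<phi> n)) sums x)"

lemma riesz_systemD:
  assumes "riesz_system \<phi> \<psi> m M"
  shows "0 < m" "0 < M" "\<And>n k. cinner (\<phi> n) (\<psi> k) = (if n = k then 1 else 0)"
    "\<And>x. summable (\<lambda>n. (cmod (cinner x (\<psi> n)))\<^sup>2)"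
    "\<And>x. m * (\<Sum>n. (cmod (cinner x (\<psi> n)))\<^sup>2) \<le> (norm x)\<^sup>2"
    "\<And>c a b. (norm (\<Sum>n\<in>{a..<b}. scaleC (c n) (\<phi> n)))\<^sup>2 \<le> M * (\<Sum>n\<in>{a..<b}. (cmod (c n))\<^sup>2)"
    "\<And>x. (\<lambda>n. scaleC (cinner x (\<psi> n)) (\<phi> n)) sums x"
  using assms unfolding riesz_system_def biorthogonal_def by auto

lemma synthesis_summable:
  fixes \<phi> :: "nat \<Rightarrow> 'a::chilbert"
  assumes block: "\<And>c a b. (norm (\<Sum>n\<in>{a..<b}. scaleC (c n) (\<phi> n)))\<^sup>2 \<le> M * (\<Sum>n\<in>{a..<b}. (cmod (c n))\<^sup>2)"
    and M: "0 < M"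
    and d: "summable (\<lambda>n. (cmod (d n))\<^sup>2)"
  shows "summable (\<lambda>n. scaleC (d n) (\<phi> n))"
    and "(norm (\<Sum>n. scaleC (d n) (\<phi> n)))\<^sup>2 \<le> M * (\<Sum>n. (cmod (d n))\<^sup>2)"
proof -
  show sm: "summable (\<lambda>n. scaleC (d n) (\<phi> n))"
    unfolding summable_Cauchy
  proof (intro allI impI)
    fix e :: real assume e: "e > 0"
    from d[unfolded summable_Cauchy, rule_format, of "e\<^sup>2 / M"] e M
    obtain N where N: "\<And>m n. m \<ge> N \<Longrightarrow> norm (\<Sum>k\<in>{m..<n}. (cmod (d k))\<^sup>2) < e\<^sup>2 / M"
      by auto
    show "\<exists>N. \<forall>m\<ge>N. \<forall>n. norm (\<Sum>k\<in>{m..<n}. scaleC (d k) (\<phi> k)) < e"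
    proof (intro exI allI impI)
      fix m n assume "m \<ge> N"
      hence "M * (\<Sum>k\<in>{m..<n}. (cmod (d k))\<^sup>2) < e\<^sup>2"
        using N[of m n] M by (simp add: sum_nonneg pos_less_divide_eq mult.commute)
      hence "(norm (\<Sum>k\<in>{m..<n}. scaleC (d k) (\<phi> k)))\<^sup>2 < e\<^sup>2"
        using block[of d m n] by linarith
      thus "norm (\<Sum>k\<in>{m..<n}. scaleC (d k) (\<phi> k)) < e"
        by (rule power2_less_imp_less) (use e in auto)
    qed
  qed
  have lim: "(\<lambda>N. (norm (\<Sum>n<N. scaleC (d n) (\<phi> n)))\<^sup>2) \<longlonglongrightarrow> (norm (\<Sum>n. scaleC (d n) (\<phi> n)))\<^sup>2"
    by (intro tendsto_intros summable_LIMSEQ sm)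
  show "(norm (\<Sum>n. scaleC (d n) (\<phi> n)))\<^sup>2 \<le> M * (\<Sum>n. (cmod (d n))\<^sup>2)"
  proof (rule LIMSEQ_le_const2[OF lim], rule exI[of _ 0], intro allI impI)
    fix N :: nat
    have "(norm (\<Sum>n<N. scaleC (d n) (\<phi> n)))\<^sup>2 \<le> M * (\<Sum>n<N. (cmod (d n))\<^sup>2)"
      using block[of d 0 N] by (simp add: atLeast0LessThan)
    also have "\<dots> \<le> M * (\<Sum>n. (cmod (d n))\<^sup>2)"
      using M d by (intro mult_left_mono sum_le_suminf) auto
    finally show "(norm (\<Sum>n<N. scaleC (d n) (\<phi> n)))\<^sup>2 \<le> M * (\<Sum>n. (cmod (d n))\<^sup>2)" .
  qed
qed

lemma cinner_synthesis:
  assumes "biorthogonal \<phi> \<psi>" and "summable (\<lambda>n. scaleC (d n) (\<phi> n))"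
  shows "cinner (\<Sum>k. scaleC (d k) (\<phi> k)) (\<psi> n) = d n"
proof -
  have "cinner (\<Sum>k. scaleC (d k) (\<phi> k)) (\<psi> n) = (\<Sum>k. d k * (if k = n then 1 else 0))"
    using assms unfolding biorthogonal_def by (simp add: cinner_suminf_left cinner_scaleC_left)
  also have "(\<lambda>k. d k * (if k = n then 1 else 0)) = (\<lambda>k. if k = n then d k else 0)"
    by auto
  finally show ?thesis using sums_single[of n d] sums_unique by metis
qed

lemma riesz_system_eqI:
  assumes "riesz_system \<phi> \<psi> m M" and "\<And>n. cinner u (\<psi> n) = cinner v (\<psi> n)"
  shows "u = v"
  using riesz_systemD(7)[OF assms(1), of u] riesz_systemD(7)[OF assms(1), of v] assms(2)
  by (simp add: sums_iff)

lemma riesz_system_synthesis: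
  assumes R: "riesz_system \<phi> \<psi> m M" and d: "summable (\<lambda>n. (cmod (d n))\<^sup>2)"
  shows "summable (\<lambda>n. scaleC (d n) (\<phi> n))"
    "(norm (\<Sum>n. scaleC (d n) (\<phi> n)))\<^sup>2 \<le> M * (\<Sum>n. (cmod (d n))\<^sup>2)"
    "\<And>k. cinner (\<Sum>n. scaleC (d n) (\<phi> n)) (\<psi> k) = d k"
  using synthesis_summable[OF riesz_systemD(6)[OF R] riesz_systemD(2)[OF R] d] R
    cinner_synthesis[of \<phi> \<psi>] unfolding riesz_system_def by auto

lemma block_bound_of_initial_bound:
  fixes \<phi> :: "nat \<Rightarrow> 'a::chilbert"
  assumes "\<And>N c. (norm (\<Sum>n<N. scaleC (c n) (\<phi> n)))\<^sup>2 \<le> M * (\<Sum>n<N. (cmod (c n))\<^sup>2)"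
  shows "(norm (\<Sum>n\<in>{a..<b}. scaleC (c n) (\<phi> n)))\<^sup>2 \<le> M * (\<Sum>n\<in>{a..<b}. (cmod (c n))\<^sup>2)"
proof -
  have restrict: "(\<Sum>n<b. if a \<le> n then f n else 0) = (\<Sum>n\<in>{a..<b}. f n)"
    for f :: "nat \<Rightarrow> 'b::comm_monoid_add"
  proof -
    have "(\<Sum>n<b. if a \<le> n then f n else 0) = (\<Sum>n\<in>{..<b} \<inter> {n. a \<le> n}. f n)"
      by (simp add: sum.inter_restrict)
    also have "{..<b} \<inter> {n. a \<le> n} = {a..<b}" by auto
    finally show ?thesis .
  qed
  define c' where "c' n = (if a \<le> n then c n else 0)" for n
  have "(\<Sum>n<b. scaleC (c' n) (\<phi> n)) = (\<Sum>n\<in>{a..<b}. scaleC (c n) (\<phi> n))"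
    unfolding restrict[symmetric] by (rule sum.cong) (auto simp: c'_def)
  moreover have "(\<Sum>n<b. (cmod (c' n))\<^sup>2) = (\<Sum>n\<in>{a..<b}. (cmod (c n))\<^sup>2)"
    unfolding restrict[symmetric] by (rule sum.cong) (auto simp: c'_def)
  ultimately show ?thesis using assms[of c' b] by simp
qed

lemma cinner_finite_combination:
  assumes "biorthogonal \<phi> \<psi>" and "finite F"
  shows "cinner (\<Sum>n\<in>F. scaleC (c n) (\<phi> n)) (\<psi> k) = (if k \<in> F then c k else 0)"
proof -
  have "cinner (\<Sum>n\<in>F. scaleC (c n) (\<phi> n)) (\<psi> k) = (\<Sum>n\<in>F. c n * (if n = k then 1 else 0))"
    using assms(1) unfolding biorthogonal_def by (simp only: cinner_sum_left cinner_scaleC_left)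
  also have "\<dots> = (\<Sum>n\<in>F. if n = k then c n else 0)" by (rule sum.cong) auto
  finally show ?thesis using assms(2) by simp
qed

lemma riesz_basis_bessel:
  fixes \<phi> \<psi> :: "nat \<Rightarrow> 'a::chilbert"
  assumes dense: "closure {(\<Sum>n\<in>F. scaleC (c n) (\<phi> n)) | F c. finite F} = UNIV"
    and bio: "biorthogonal \<phi> \<psi>" and m: "0 \<le> m"
    and lower: "\<And>N c. m * (\<Sum>n<N. (cmod (c n))\<^sup>2) \<le> (norm (\<Sum>n<N. scaleC (c n) (\<phi> n)))\<^sup>2"
  shows "m * (\<Sum>n<N. (cmod (cinner x (\<psi> n)))\<^sup>2) \<le> (norm x)\<^sup>2"
proof -
  let ?V = "{(\<Sum>n\<in>F. scaleC (c n) (\<phi> n)) | F c. finite F}"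
  let ?B = "{x. m * (\<Sum>n<N. (cmod (cinner x (\<psi> n)))\<^sup>2) \<le> (norm x)\<^sup>2}"
  have sub: "?V \<subseteq> ?B"
  proof
    fix v assume "v \<in> ?V"
    then obtain F c where F: "finite F" and v: "v = (\<Sum>n\<in>F. scaleC (c n) (\<phi> n))"
      by blast
    obtain K where K: "F \<subseteq> {..<K}" using finite_nat_bounded[OF F] by blast
    define N' where "N' = max N K"
    have "(\<Sum>n<N'. scaleC (cinner v (\<psi> n)) (\<phi> n)) = (\<Sum>n<N'. if n \<in> F then scaleC (c n) (\<phi> n) else 0)"
      by (intro sum.cong refl) (simp add: v cinner_finite_combination[OF bio F])
    also have "\<dots> = (\<Sum>n\<in>{..<N'} \<inter> F. scaleC (c n) (\<phi> n))"
      by (rule sum.inter_restrict[symmetric]) simp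
    also have "{..<N'} \<inter> F = F" using K by (auto simp: N'_def)
    finally have expand: "(\<Sum>n<N'. scaleC (cinner v (\<psi> n)) (\<phi> n)) = v" by (simp add: v)
    have "m * (\<Sum>n<N. (cmod (cinner v (\<psi> n)))\<^sup>2) \<le> m * (\<Sum>n<N'. (cmod (cinner v (\<psi> n)))\<^sup>2)"
      using m by (intro mult_left_mono sum_mono2) (auto simp: N'_def)
    also have "\<dots> \<le> (norm v)\<^sup>2" using lower[where N=N' and c="\<lambda>n. cinner v (\<psi> n)"] expand by simp
    finally show "v \<in> ?B" by simp
  qed
  have "closed ?B" by (intro closed_Collect_le continuous_intros)
  with sub have "closure ?V \<subseteq> ?B" by (rule closure_minimal)
  thus ?thesis using dense by blast
qed

lemma bounded_linear_expansion:
  fixes \<phi> \<psi> :: "nat \<Rightarrow> 'a::chilbert"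
  assumes m: "0 < m" and M: "0 < M"
    and coeff: "\<And>x. summable (\<lambda>n. (cmod (cinner x (\<psi> n)))\<^sup>2)"
      "\<And>x. m * (\<Sum>n. (cmod (cinner x (\<psi> n)))\<^sup>2) \<le> (norm x)\<^sup>2"
    and block: "\<And>c a b. (norm (\<Sum>n\<in>{a..<b}. scaleC (c n) (\<phi> n)))\<^sup>2 \<le> M * (\<Sum>n\<in>{a..<b}. (cmod (c n))\<^sup>2)"
  shows "bounded_linear (\<lambda>x. \<Sum>n. scaleC (cinner x (\<psi> n)) (\<phi> n))"
proof (rule bounded_linear_intro[where K="sqrt (M / m)"])
  define S where "S x = (\<Sum>n. scaleC (cinner x (\<psi> n)) (\<phi> n))" for x
  note synth = synthesis_summable[OF block M coeff(1)]
  show "S (x + y) = S x + S y" for x y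
    unfolding S_def by (simp add: cinner_add_left scaleC_add_left suminf_add[OF synth(1) synth(1)])
  show "S (scaleR r x) = scaleR r (S x)" for r x
  proof -
    have "S (scaleR r x) = (\<Sum>n. scaleR r (scaleC (cinner x (\<psi> n)) (\<phi> n)))"
      unfolding S_def by (simp add: scaleR_scaleC scaleC_scaleC cinner_scaleC_left)
    also have "\<dots> = scaleR r (S x)"
      unfolding S_def by (rule bounded_linear.suminf[OF bounded_linear_scaleR_right synth(1), symmetric])
    finally show ?thesis .
  qed
  show "norm (S x) \<le> norm x * sqrt (M / m)" for x
  proof -
    have "(norm (S x))\<^sup>2 \<le> M * (\<Sum>n. (cmod (cinner x (\<psi> n)))\<^sup>2)"
      unfolding S_def by (rule synth(2))
    also have "\<dots> \<le> M * ((norm x)\<^sup>2 / m)"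
      using coeff(2)[of x] m M by (intro mult_left_mono) (auto simp: pos_le_divide_eq mult.commute)
    finally have "norm (S x) \<le> sqrt (M / m * (norm x)\<^sup>2)" by (simp add: real_le_rsqrt)
    also have "\<dots> = norm x * sqrt (M / m)" by (subst real_sqrt_mult) (simp add: mult.commute)
    finally show ?thesis .
  qed
qed

lemma riesz_basis_expansion:
  fixes \<phi> \<psi> :: "nat \<Rightarrow> 'a::chilbert"
  assumes dense: "closure {(\<Sum>n\<in>F. scaleC (c n) (\<phi> n)) | F c. finite F} = UNIV"
    and bio: "biorthogonal \<phi> \<psi>" and m: "0 < m" and M: "0 < M"
    and coeff: "\<And>x. summable (\<lambda>n. (cmod (cinner x (\<psi> n)))\<^sup>2)"
      "\<And>x. m * (\<Sum>n. (cmod (cinner x (\<psi> n)))\<^sup>2) \<le> (norm x)\<^sup>2"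
    and block: "\<And>c a b. (norm (\<Sum>n\<in>{a..<b}. scaleC (c n) (\<phi> n)))\<^sup>2 \<le> M * (\<Sum>n\<in>{a..<b}. (cmod (c n))\<^sup>2)"
  shows "(\<lambda>n. scaleC (cinner x (\<psi> n)) (\<phi> n)) sums x"
proof -
  define S where "S x = (\<Sum>n. scaleC (cinner x (\<psi> n)) (\<phi> n))" for x
  have closed: "closed {x. S x = x}"
    unfolding S_def using bounded_linear_expansion[OF m M coeff block]
    by (intro closed_Collect_eq continuous_on_id linear_continuous_on)
  have "{(\<Sum>n\<in>F. scaleC (c n) (\<phi> n)) | F c. finite F} \<subseteq> {x. S x = x}"
  proof
    fix v assume "v \<in> {(\<Sum>n\<in>F. scaleC (c n) (\<phi> n)) | F c. finite F}"
    then obtain F c where F: "finite F" and v: "v = (\<Sum>n\<in>F. scaleC (c n) (\<phi> n))"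
      by blast
    have "S v = (\<Sum>n\<in>F. scaleC (cinner v (\<psi> n)) (\<phi> n))"
      unfolding S_def by (rule suminf_finite[OF F]) (simp add: v cinner_finite_combination[OF bio F])
    thus "v \<in> {x. S x = x}" by (simp add: v cinner_finite_combination[OF bio F])
  qed
  hence "closure {(\<Sum>n\<in>F. scaleC (c n) (\<phi> n)) | F c. finite F} \<subseteq> {x. S x = x}"
    using closed by (rule closure_minimal)
  hence "S x = x" using dense by blast
  thus ?thesis using synthesis_summable(1)[OF block M coeff(1)] by (simp add: S_def sums_iff)
qed

lemma riesz_basis_riesz_system:
  fixes \<phi> \<psi> :: "nat \<Rightarrow> 'a::chilbert"
  assumes "riesz_basis \<phi>" and bio: "biorthogonal \<phi> \<psi>"
  obtains m M where "riesz_system \<phi> \<psi> m M"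
proof -
  obtain m M where dense: "closure {(\<Sum>n\<in>F. scaleC (c n) (\<phi> n)) | F c. finite F} = UNIV"
    and m: "0 < m" and M: "0 < M" and frame:
    "\<And>N (c :: nat \<Rightarrow> complex). m * (\<Sum>n<N. (cmod (c n))\<^sup>2) \<le> (norm (\<Sum>n<N. scaleC (c n) (\<phi> n)))\<^sup>2 \<and>
        (norm (\<Sum>n<N. scaleC (c n) (\<phi> n)))\<^sup>2 \<le> M * (\<Sum>n<N. (cmod (c n))\<^sup>2)"
    using assms(1) unfolding riesz_basis_def by blast
  note block = block_bound_of_initial_bound[OF conjunct2[OF frame]]
  note bessel = riesz_basis_bessel[OF dense bio less_imp_le[OF m] conjunct1[OF frame]]
  have coeff: "summable (\<lambda>n. (cmod (cinner x (\<psi> n)))\<^sup>2)"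
    "m * (\<Sum>n. (cmod (cinner x (\<psi> n)))\<^sup>2) \<le> (norm x)\<^sup>2" for x
  proof -
    have partial: "(\<Sum>n<N. (cmod (cinner x (\<psi> n)))\<^sup>2) \<le> (norm x)\<^sup>2 / m" for N
      using bessel[where N=N and x=x] m by (simp add: pos_le_divide_eq mult.commute)
    show "summable (\<lambda>n. (cmod (cinner x (\<psi> n)))\<^sup>2)"
      by (rule summableI_nonneg_bounded[OF _ partial]) simp
    hence "(\<Sum>n. (cmod (cinner x (\<psi> n)))\<^sup>2) \<le> (norm x)\<^sup>2 / m"
      by (rule suminf_le_const) (rule partial)
    thus "m * (\<Sum>n. (cmod (cinner x (\<psi> n)))\<^sup>2) \<le> (norm x)\<^sup>2"
      using m by (simp add: pos_le_divide_eq mult.commute)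
  qed
  have "riesz_system \<phi> \<psi> m M"
    unfolding riesz_system_def
    using m M bio coeff block riesz_basis_expansion[OF dense bio m M coeff block] by auto
  thus ?thesis by (rule that)
qed

lemma riesz_system_dual_bessel:
  assumes R: "riesz_system \<phi> \<psi> m M"
  shows "(\<Sum>n<N. (cmod (cinner y (\<phi> n)))\<^sup>2) \<le> M * (norm y)\<^sup>2"
proof -
  define S where "S = (\<Sum>n<N. (cmod (cinner y (\<phi> n)))\<^sup>2)"
  define v where "v = (\<Sum>n<N. scaleC (cinner y (\<phi> n)) (\<phi> n))"
  have S0: "0 \<le> S" unfolding S_def by (simp add: sum_nonneg)
  have "cinner y v = (\<Sum>n<N. cnj (cinner y (\<phi> n)) * cinner y (\<phi> n))"
    unfolding v_def by (simp add: cinner_sum_right cinner_scaleC_right)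
  also have "\<dots> = complex_of_real S"
    unfolding S_def of_real_sum by (intro sum.cong refl) (metis complex_norm_square mult.commute)
  finally have "S = cmod (cinner y v)" using S0 by simp
  also have "\<dots> \<le> norm y * norm v" by (rule Cauchy_Schwarz_cinner)
  finally have "S\<^sup>2 \<le> (norm y)\<^sup>2 * (norm v)\<^sup>2"
    using S0 by (metis power_mono power_mult_distrib)
  also have "(norm v)\<^sup>2 \<le> M * S"
    using riesz_systemD(6)[OF R, of "\<lambda>n. cinner y (\<phi> n)" 0 N]
    by (simp add: v_def S_def atLeast0LessThan)
  hence "(norm y)\<^sup>2 * (norm v)\<^sup>2 \<le> (M * (norm y)\<^sup>2) * S"
    using mult_left_mono[of "(norm v)\<^sup>2" "M * S" "(norm y)\<^sup>2"] by (simp add: algebra_simps)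
  finally have "S * S \<le> (M * (norm y)\<^sup>2) * S" by (simp add: power2_eq_square)
  thus ?thesis
    using S0 riesz_systemD(2)[OF R] unfolding S_def[symmetric]
    by (cases "S = 0") (auto simp: mult_le_cancel_right)
qed

lemma riesz_system_dual_block_bound:
  assumes R: "riesz_system \<phi> \<psi> m M"
  shows "(norm (\<Sum>n\<in>{a..<b}. scaleC (d n) (\<psi> n)))\<^sup>2 \<le> 1 / m * (\<Sum>n\<in>{a..<b}. (cmod (d n))\<^sup>2)"
proof -
  note m = riesz_systemD(1)[OF R]
  define A where "A = {a..<b}"
  define z where "z = (\<Sum>n\<in>A. scaleC (d n) (\<psi> n))"
  define P where "P = (\<Sum>k\<in>A. (cmod (cinner z (\<psi> k)))\<^sup>2)"
  define D where "D = (\<Sum>k\<in>A. (cmod (d k))\<^sup>2)"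
  have fA: "finite A" by (simp add: A_def)
  have phi_z: "cinner (\<phi> k) z = (if k \<in> A then cnj (d k) else 0)" for k
  proof -
    have "cinner (\<phi> k) z = (\<Sum>n\<in>A. cnj (d n) * (if k = n then 1 else 0))"
      unfolding z_def by (simp only: cinner_sum_right cinner_scaleC_right riesz_systemD(3)[OF R])
    also have "\<dots> = (\<Sum>n\<in>A. if n = k then cnj (d n) else 0)" by (rule sum.cong) auto
    finally show ?thesis using fA by simp
  qed
  have P: "m * P \<le> (norm z)\<^sup>2"
  proof -
    have "P \<le> (\<Sum>k. (cmod (cinner z (\<psi> k)))\<^sup>2)"
      unfolding P_def by (rule sum_le_suminf[OF riesz_systemD(4)[OF R] fA]) auto
    hence "m * P \<le> m * (\<Sum>k. (cmod (cinner z (\<psi> k)))\<^sup>2)" using m by simp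
    thus ?thesis using riesz_systemD(5)[OF R, of z] by linarith
  qed
  \<comment> \<open>expanding \<open>z\<close> in the basis \<open>\<phi>\<close> leaves only the terms indexed by \<open>A\<close>\<close>
  have "cinner z z = (\<Sum>k. cinner (scaleC (cinner z (\<psi> k)) (\<phi> k)) z)"
    using riesz_systemD(7)[OF R, of z] by (simp add: sums_iff cinner_suminf_left[symmetric])
  also have "\<dots> = (\<Sum>k. cinner z (\<psi> k) * cinner (\<phi> k) z)"
    by (simp add: cinner_scaleC_left)
  also have "\<dots> = (\<Sum>k\<in>A. cinner z (\<psi> k) * cinner (\<phi> k) z)"
    by (rule suminf_finite[OF fA]) (simp add: phi_z)
  also have "\<dots> = (\<Sum>k\<in>A. cinner z (\<psi> k) * cnj (d k))"
    by (rule sum.cong) (simp_all add: phi_z)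
  finally have zz: "cinner z z = (\<Sum>k\<in>A. cinner z (\<psi> k) * cnj (d k))" .
  have "(norm z)\<^sup>2 = cmod (cinner z z)" by (simp add: cinner_self norm_power)
  also have "\<dots> \<le> (\<Sum>k\<in>A. cmod (cinner z (\<psi> k)) * cmod (d k))"
    unfolding zz by (rule order_trans[OF norm_sum]) (simp add: norm_mult)
  finally have "((norm z)\<^sup>2)\<^sup>2 \<le> (\<Sum>k\<in>A. cmod (cinner z (\<psi> k)) * cmod (d k))\<^sup>2"
    by (intro power_mono) auto
  also have "\<dots> \<le> P * D" unfolding P_def D_def by (rule Cauchy_Schwarz_ineq_sum)
  also have "\<dots> \<le> (norm z)\<^sup>2 / m * D"
    using P m by (intro mult_right_mono) (auto simp: D_def sum_nonneg pos_le_divide_eq mult.commute)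
  finally have "(norm z)\<^sup>2 * (norm z)\<^sup>2 \<le> (D / m) * (norm z)\<^sup>2"
    by (simp add: power2_eq_square mult.commute mult.left_commute)
  hence "(norm z)\<^sup>2 \<le> D / m" if "z \<noteq> 0" by (rule mult_right_le_imp_le) (use that in simp)
  hence "(norm z)\<^sup>2 \<le> D / m" using m by (cases "z = 0") (auto simp: D_def sum_nonneg)
  thus ?thesis by (simp add: z_def D_def A_def)
qed

lemma riesz_system_dual_expansion:
  assumes R: "riesz_system \<phi> \<psi> m M"
    and sm: "summable (\<lambda>n. scaleC (cinner y (\<phi> n)) (\<psi> n))"
  shows "(\<lambda>n. scaleC (cinner y (\<phi> n)) (\<psi> n)) sums y"
proof -
  define w where "w = (\<Sum>n. scaleC (cinner y (\<phi> n)) (\<psi> n))"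
  have "cinner (w - y) x = 0" for x
  proof -
    have smx: "summable (\<lambda>n. scaleC (cinner x (\<psi> n)) (\<phi> n))"
      using riesz_systemD(7)[OF R, of x] by (simp add: sums_iff)
    have "cinner w x = (\<Sum>n. cinner y (\<phi> n) * cinner (\<psi> n) x)"
      unfolding w_def by (simp add: cinner_suminf_left[OF sm] cinner_scaleC_left)
    moreover have "cinner y x = cinner y (\<Sum>n. scaleC (cinner x (\<psi> n)) (\<phi> n))"
      using riesz_systemD(7)[OF R, of x] by (simp add: sums_iff)
    moreover have "\<dots> = (\<Sum>n. cnj (cinner x (\<psi> n)) * cinner y (\<phi> n))"
      by (simp add: cinner_suminf_right[OF smx] cinner_scaleC_right)
    moreover have "\<dots> = (\<Sum>n. cinner y (\<phi> n) * cinner (\<psi> n) x)"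
      by (simp add: cinner_commute[of x] mult.commute)
    ultimately show ?thesis by (simp add: cinner_diff_left)
  qed
  hence "w - y = 0" by (intro cinner_eq_zeroI) (metis cinner_commute complex_cnj_zero)
  thus ?thesis using sm by (simp add: w_def sums_iff)
qed

lemma riesz_system_dual:
  assumes R: "riesz_system \<phi> \<psi> m M"
  shows "riesz_system \<psi> \<phi> (1 / M) (1 / m)"
proof -
  note m = riesz_systemD(1)[OF R] and M = riesz_systemD(2)[OF R]
  have bio: "biorthogonal \<psi> \<phi>"
    using riesz_systemD(3)[OF R] unfolding biorthogonal_def by (metis cinner_commute complex_cnj_one complex_cnj_zero)
  have summable: "summable (\<lambda>n. (cmod (cinner y (\<phi> n)))\<^sup>2)" for y
    by (rule summableI_nonneg_bounded[OF _ riesz_system_dual_bessel[OF R]]) simp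
  have bessel: "1 / M * (\<Sum>n. (cmod (cinner y (\<phi> n)))\<^sup>2) \<le> (norm y)\<^sup>2" for y
  proof -
    have "(\<Sum>n. (cmod (cinner y (\<phi> n)))\<^sup>2) \<le> M * (norm y)\<^sup>2"
      by (rule suminf_le_const[OF summable riesz_system_dual_bessel[OF R]])
    thus ?thesis using M by (simp add: field_simps)
  qed
  note block = riesz_system_dual_block_bound[OF R]
  have "(\<lambda>n. scaleC (cinner y (\<phi> n)) (\<psi> n)) sums y" for y
    using riesz_system_dual_expansion[OF R synthesis_summable(1)[OF block _ summable]] m by simp
  thus ?thesis
    unfolding riesz_system_def using m M bio summable bessel block by auto
qed

section \<open>Diagonal operators\<close>

definition diag_op :: "(nat \<Rightarrow> complex) \<Rightarrow> (nat \<Rightarrow> 'a::chilbert) \<Rightarrow> (nat \<Rightarrow> 'a) \<Rightarrow> 'a \<Rightarrow> 'a" where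
  "diag_op g \<phi> \<psi> x = (\<Sum>n. scaleC (g n * cinner x (\<psi> n)) (\<phi> n))"

lemma rs_semigroup_eq_diag_op:
  "rs_semigroup lam \<phi> \<psi> t = diag_op (\<lambda>n. exp (complex_of_real t * lam n)) \<phi> \<psi>"
  by (rule ext) (simp add: rs_semigroup_def diag_op_def)

lemma summable_bounded_multiplier:
  assumes R: "riesz_system \<phi> \<psi> m M" and B: "\<And>n. cmod (g n) \<le> B"
  shows "summable (\<lambda>n. (cmod (g n * cinner x (\<psi> n)))\<^sup>2)"
proof (rule summable_comparison_test'[where N=0])
  show "summable (\<lambda>n. B\<^sup>2 * (cmod (cinner x (\<psi> n)))\<^sup>2)"
    by (intro summable_mult riesz_systemD(4)[OF R])
  fix n
  have "(cmod (g n))\<^sup>2 \<le> B\<^sup>2" using B[of n] by (intro power_mono) auto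
  thus "norm ((cmod (g n * cinner x (\<psi> n)))\<^sup>2) \<le> B\<^sup>2 * (cmod (cinner x (\<psi> n)))\<^sup>2"
    by (simp add: norm_mult power_mult_distrib mult_right_mono)
qed

lemma diag_op:
  assumes R: "riesz_system \<phi> \<psi> m M" and B: "\<And>n. cmod (g n) \<le> B"
  shows diag_op_summable: "summable (\<lambda>n. scaleC (g n * cinner x (\<psi> n)) (\<phi> n))"
    and cinner_diag_op: "cinner (diag_op g \<phi> \<psi> x) (\<psi> k) = g k * cinner x (\<psi> k)"
    and norm_diag_op_le: "(norm (diag_op g \<phi> \<psi> x))\<^sup>2 \<le> M * (\<Sum>n. (cmod (g n * cinner x (\<psi> n)))\<^sup>2)"
  using riesz_system_synthesis[OF R summable_bounded_multiplier[OF R B, where x=x]]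
  unfolding diag_op_def by auto

lemma resolvent_diag_op:
  assumes R: "riesz_system \<phi> \<psi> m M" and B: "\<And>n. cmod (g n) \<le> B"
    and sep: "0 < \<epsilon>" "\<And>n. \<epsilon> \<le> cmod (\<mu> - g n)"
  shows "resolvent \<mu> (diag_op g \<phi> \<psi>) x = diag_op (\<lambda>n. 1 / (\<mu> - g n)) \<phi> \<psi> x"
proof -
  define h where "h n = 1 / (\<mu> - g n)" for n
  define y where "y = diag_op h \<phi> \<psi> x"
  have nz: "\<mu> - g n \<noteq> 0" for n using sep(1) sep(2)[of n] by auto
  have "cmod (h n) \<le> 1 / \<epsilon>" for n
    unfolding h_def using sep(1) sep(2)[of n] by (simp add: norm_divide divide_simps)
  hence cinner_y: "cinner y (\<psi> n) = h n * cinner x (\<psi> n)" for n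
    unfolding y_def by (rule cinner_diag_op[OF R])
  have cinner_shifted: "cinner (scaleC \<mu> z - diag_op g \<phi> \<psi> z) (\<psi> n) = (\<mu> - g n) * cinner z (\<psi> n)" for z n
    by (simp add: cinner_diff_left cinner_scaleC_left cinner_diag_op[OF R B] algebra_simps)
  have solves: "z = y \<longleftrightarrow> scaleC \<mu> z - diag_op g \<phi> \<psi> z = x" for z
  proof -
    have "z = y \<longleftrightarrow> (\<forall>n. cinner z (\<psi> n) = h n * cinner x (\<psi> n))"
      using riesz_system_eqI[OF R] cinner_y by metis
    also have "\<dots> \<longleftrightarrow> (\<forall>n. (\<mu> - g n) * cinner z (\<psi> n) = cinner x (\<psi> n))"
      using nz by (auto simp: h_def field_simps)
    also have "\<dots> \<longleftrightarrow> scaleC \<mu> z - diag_op g \<phi> \<psi> z = x"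
      using riesz_system_eqI[OF R] cinner_shifted by metis
    finally show ?thesis .
  qed
  hence "resolvent \<mu> (diag_op g \<phi> \<psi>) x = y"
    unfolding resolvent_def by (simp add: solves[symmetric])
  thus ?thesis by (simp add: y_def h_def[abs_def])
qed

lemma hadjoint_diag_op:
  assumes R: "riesz_system \<phi> \<psi> m M" and R': "riesz_system \<psi> \<phi> m' M'"
    and B: "\<And>n. cmod (g n) \<le> B"
  shows "hadjoint (diag_op g \<phi> \<psi>) = diag_op (\<lambda>n. cnj (g n)) \<psi> \<phi>"
proof
  fix y
  have B': "cmod (cnj (g n)) \<le> B" for n using B[of n] by simp
  define w where "w = diag_op (\<lambda>n. cnj (g n)) \<psi> \<phi> y"
  have adjoint: "cinner (diag_op g \<phi> \<psi> x) y = cinner x w" for x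
  proof -
    have "cinner (diag_op g \<phi> \<psi> x) y = (\<Sum>n. g n * cinner x (\<psi> n) * cinner (\<phi> n) y)"
      unfolding diag_op_def
      by (simp add: cinner_suminf_left[OF diag_op_summable[OF R B]] cinner_scaleC_left)
    also have "\<dots> = (\<Sum>n. cnj (cnj (g n) * cinner y (\<phi> n)) * cinner x (\<psi> n))"
      by (simp add: cinner_commute[of y] mult.commute mult.left_commute)
    also have "\<dots> = cinner x w"
      unfolding w_def diag_op_def
      by (simp add: cinner_suminf_right[OF diag_op_summable[OF R' B']] cinner_scaleC_right)
    finally show ?thesis .
  qed
  have "z = w" if "\<forall>x. cinner (diag_op g \<phi> \<psi> x) y = cinner x z" for z
  proof -
    have "cinner x (z - w) = 0" for x using that adjoint[of x] by (simp add: cinner_diff_right)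
    thus ?thesis using cinner_eq_zeroI[of "z - w"] by (metis cinner_commute complex_cnj_zero right_minus_eq)
  qed
  thus "hadjoint (diag_op g \<phi> \<psi>) y = diag_op (\<lambda>n. cnj (g n)) \<psi> \<phi> y"
    unfolding hadjoint_def w_def[symmetric] using adjoint by (intro the_equality) auto
qed

lemma norm_resolvent_diag_op_le:
  assumes R: "riesz_system \<phi> \<psi> m M" and B: "\<And>n. cmod (g n) \<le> B"
    and sep: "0 < \<epsilon>" "\<And>n. \<epsilon> \<le> cmod (\<mu> - g n)"
  shows "summable (\<lambda>n. (cmod (cinner x (\<psi> n)))\<^sup>2 / (cmod (\<mu> - g n))\<^sup>2)"
    and "(norm (resolvent \<mu> (diag_op g \<phi> \<psi>) x))\<^sup>2
       \<le> M * (\<Sum>n. (cmod (cinner x (\<psi> n)))\<^sup>2 / (cmod (\<mu> - g n))\<^sup>2)"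
proof -
  have bound: "cmod (1 / (\<mu> - g n)) \<le> 1 / \<epsilon>" for n
    using sep(1) sep(2)[of n] by (simp add: norm_divide divide_simps)
  have eq: "(cmod (1 / (\<mu> - g n) * cinner x (\<psi> n)))\<^sup>2 = (cmod (cinner x (\<psi> n)))\<^sup>2 / (cmod (\<mu> - g n))\<^sup>2" for n
    by (simp add: norm_mult norm_divide power_divide power_mult_distrib)
  show "summable (\<lambda>n. (cmod (cinner x (\<psi> n)))\<^sup>2 / (cmod (\<mu> - g n))\<^sup>2)"
    using summable_bounded_multiplier[where g="\<lambda>n. 1 / (\<mu> - g n)", OF R bound, where x=x] by (simp only: eq)
  show "(norm (resolvent \<mu> (diag_op g \<phi> \<psi>) x))\<^sup>2
       \<le> M * (\<Sum>n. (cmod (cinner x (\<psi> n)))\<^sup>2 / (cmod (\<mu> - g n))\<^sup>2)"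
    using norm_diag_op_le[where g="\<lambda>n. 1 / (\<mu> - g n)", OF R bound, where x=x] resolvent_diag_op[OF R B sep] by (simp only: eq)
qed

section \<open>Integrals over circles\<close>

lemma Cauchy_integrand_circle_eq:
  fixes a w :: complex and r :: real
  assumes r: "0 < r" and a: "cmod a < r" and w: "cmod w = 1"
  shows "1 / (complex_of_real (r\<^sup>2) - cnj a * (complex_of_real r * w)) / (complex_of_real r * w - a)
           * complex_of_real r * \<i> * w
         = \<i> * complex_of_real (1 / (cmod (complex_of_real r * w - a))\<^sup>2)"
proof -
  have w0: "w \<noteq> 0" using w by auto
  have r0: "complex_of_real r \<noteq> 0" using r by simp
  have n1: "complex_of_real r * w - a \<noteq> 0"
  proof
    assume "complex_of_real r * w - a = 0"
    hence "a = complex_of_real r * w" by simp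
    hence "cmod a = r" using w r by (simp add: norm_mult)
    thus False using a by simp
  qed
  have n2: "complex_of_real r - cnj a * w \<noteq> 0"
  proof
    assume "complex_of_real r - cnj a * w = 0"
    hence "cmod (cnj a * w) = r" using r by (metis eq_iff_diff_eq_0 norm_of_real abs_of_pos)
    thus False using a w by (simp add: norm_mult)
  qed
  have "w * cnj w = 1" using w complex_norm_square[of w] by simp
  hence cnj_w: "cnj w = 1 / w" using w0 by (simp add: field_simps)
  have "complex_of_real ((cmod (complex_of_real r * w - a))\<^sup>2)
      = (complex_of_real r * w - a) * (complex_of_real r * (1 / w) - cnj a)"
    using complex_norm_square[of "complex_of_real r * w - a"] by (simp add: cnj_w)
  also have "\<dots> = (complex_of_real r * w - a) * (complex_of_real r - cnj a * w) / w"
    using w0 by (simp add: field_simps)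
  finally have norm_eq: "complex_of_real ((cmod (complex_of_real r * w - a))\<^sup>2)
      = (complex_of_real r * w - a) * (complex_of_real r - cnj a * w) / w" .
  have factor: "complex_of_real (r\<^sup>2) - cnj a * (complex_of_real r * w)
      = complex_of_real r * (complex_of_real r - cnj a * w)"
    by (simp add: algebra_simps power2_eq_square)
  have "1 / (R * X) / Y * R * \<i> * v = \<i> * (1 / (Y * X / v))"
    if "R \<noteq> 0" "X \<noteq> 0" "Y \<noteq> 0" "v \<noteq> 0" for R X Y v :: complex
    using that by (simp add: field_simps)
  from this[OF r0 n2 n1 w0] show ?thesis
    unfolding factor of_real_divide of_real_1 norm_eq .
qed

lemma has_integral_inverse_dist_circle:
  fixes a :: complex and r :: real
  assumes r: "0 < r" and a: "cmod a < r"
  shows "((\<lambda>\<theta>. 1 / (cmod (complex_of_real r * exp (\<i> * complex_of_real \<theta>) - a))\<^sup>2)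
          has_integral 2 * pi / (r\<^sup>2 - (cmod a)\<^sup>2)) {0..2*pi}"
proof -
  \<comment> \<open>Cauchy's formula for \<open>f u = 1 / (r\<^sup>2 - cnj a * u)\<close>: on the circle \<open>|u| = r\<close> the
     Cauchy integrand \<open>f u / (u - a) du\<close> is \<open>\<i> / |u - a|\<^sup>2 d\<theta>\<close>\<close>
  define f where "f u = 1 / (complex_of_real (r\<^sup>2) - cnj a * u)" for u
  define F where "F \<theta> = 1 / (cmod (complex_of_real r * exp (\<i> * complex_of_real \<theta>) - a))\<^sup>2" for \<theta>
  have den: "complex_of_real (r\<^sup>2) - cnj a * u \<noteq> 0" if "cmod u \<le> r" for u
  proof
    assume "complex_of_real (r\<^sup>2) - cnj a * u = 0"
    hence "cnj a * u = complex_of_real (r\<^sup>2)" by simp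
    hence "cmod (cnj a * u) = r\<^sup>2" by (simp add: norm_power)
    moreover have "cmod (cnj a * u) < r\<^sup>2"
    proof -
      have "cmod (cnj a * u) \<le> cmod a * r" using that by (simp add: norm_mult mult_left_mono)
      also have "\<dots> < r * r" using a r by (intro mult_strict_right_mono) auto
      finally show ?thesis by (simp add: power2_eq_square)
    qed
    ultimately show False by simp
  qed
  have "((\<lambda>u. f u / (u - a)) has_contour_integral (2 * of_real pi * \<i> * f a)) (circlepath 0 r)"
  proof (rule Cauchy_integral_circlepath)
    show "continuous_on (cball 0 r) f" unfolding f_def by (intro continuous_intros) (use den in auto)
    show "f holomorphic_on ball 0 r" unfolding f_def by (intro holomorphic_intros) (use den in auto)
  qed (use a in simp)
  hence "((\<lambda>t. f (0 + r * cis t) / (0 + r * cis t - a) * r * \<i> * cis t)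
           has_integral (2 * of_real pi * \<i> * f a)) {0..2*pi}"
    unfolding circlepath_def by (subst (asm) has_contour_integral_part_circlepath_iff) auto
  moreover have "f (0 + complex_of_real r * cis t) / (0 + complex_of_real r * cis t - a)
      * complex_of_real r * \<i> * cis t = \<i> * complex_of_real (F t)" for t
    using Cauchy_integrand_circle_eq[OF r a, of "cis t"]
    by (simp only: f_def F_def add_0_left cis_conv_exp norm_exp_i_times)
  ultimately have "((\<lambda>t. \<i> * complex_of_real (F t)) has_integral (2 * of_real pi * \<i> * f a)) {0..2*pi}"
    by simp
  hence "((\<lambda>t. complex_of_real (F t)) has_integral (2 * of_real pi * f a)) {0..2*pi}"
    by (subst (asm) has_integral_mult_right_iff) (auto simp: field_simps)
  moreover have "f a = complex_of_real (1 / (r\<^sup>2 - (cmod a)\<^sup>2))"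
    using complex_norm_square[of a] by (simp add: f_def mult.commute)
  ultimately have "((\<lambda>t. complex_of_real (F t)) has_integral
      complex_of_real (2 * pi / (r\<^sup>2 - (cmod a)\<^sup>2))) {0..2*pi}"
    by simp
  from has_integral_linear[OF this bounded_linear_Re]
  show ?thesis by (simp add: o_def F_def)
qed

lemma continuous_on_inverse_dist_circle:
  fixes a :: complex and r :: real
  assumes "0 < r" "cmod a \<noteq> r"
  shows "continuous_on S (\<lambda>\<theta>. 1 / (cmod (complex_of_real r * exp (\<i> * complex_of_real \<theta>) - a))\<^sup>2)"
proof -
  have "complex_of_real r * exp (\<i> * complex_of_real \<theta>) \<noteq> a" for \<theta>
    using assms by (auto simp: norm_mult)
  thus ?thesis by (intro continuous_intros) auto
qed

lemma integral_inverse_dist_circle_outside_le: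
  fixes a :: complex and r :: real
  assumes r: "0 < r" and a: "r < cmod a"
  shows "integral {0..2*pi} (\<lambda>\<theta>. 1 / (cmod (complex_of_real r * exp (\<i> * complex_of_real \<theta>) - a))\<^sup>2)
           \<le> 2 * pi / (cmod a - r)\<^sup>2"
proof -
  have "1 / (cmod (complex_of_real r * exp (\<i> * complex_of_real \<theta>) - a))\<^sup>2 \<le> 1 / (cmod a - r)\<^sup>2" for \<theta>
  proof -
    have "cmod a - r \<le> cmod (complex_of_real r * exp (\<i> * complex_of_real \<theta>) - a)"
      using norm_triangle_ineq3[of a "complex_of_real r * exp (\<i> * complex_of_real \<theta>)"] r
      by (simp add: norm_mult norm_minus_commute)
    thus ?thesis using a by (intro divide_left_mono mult_pos_pos power_mono) auto
  qed
  hence "integral {0..2*pi} (\<lambda>\<theta>. 1 / (cmod (complex_of_real r * exp (\<i> * complex_of_real \<theta>) - a))\<^sup>2)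
        \<le> integral {0..2*pi} (\<lambda>\<theta>. 1 / (cmod a - r)\<^sup>2)"
    using r a by (intro integral_le integrable_continuous_interval continuous_on_inverse_dist_circle) auto
  thus ?thesis by simp
qed

text \<open>For \<open>1 < r\<close> and \<open>|\<zeta>| = a\<close> with \<open>a \<noteq> r\<close>, \<open>circle_bound r a\<close> bounds the integral of
  \<open>|r e\<^sup>i\<^sup>\<theta> - \<zeta>|\<^sup>-\<^sup>2\<close> over a period: exactly when \<open>\<zeta>\<close> lies in the unit disc, crudely otherwise.\<close>

definition circle_bound :: "real \<Rightarrow> real \<Rightarrow> real" where
  "circle_bound r a = (if a < 1 then 2 * pi / (r\<^sup>2 - a\<^sup>2) else 2 * pi / (a - r)\<^sup>2)"

lemma integral_inverse_dist_circle_le_circle_bound: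
  fixes \<zeta> :: complex
  assumes r: "1 < r" and \<zeta>: "cmod \<zeta> < 1 \<or> r < cmod \<zeta>"
  shows "integral {0..2*pi} (\<lambda>\<theta>. 1 / (cmod (complex_of_real r * exp (\<i> * complex_of_real \<theta>) - \<zeta>))\<^sup>2)
           \<le> circle_bound r (cmod \<zeta>)"
proof (cases "cmod \<zeta> < 1")
  case True
  with has_integral_inverse_dist_circle[of r \<zeta>] r show ?thesis
    by (simp add: circle_bound_def integral_unique)
next
  case False
  with integral_inverse_dist_circle_outside_le[of r \<zeta>] r \<zeta> show ?thesis
    by (simp add: circle_bound_def)
qed

lemma circle_bound_nonneg:
  assumes "0 \<le> a" "1 < r"
  shows "0 \<le> circle_bound r a"
proof (cases "a < 1")
  case True
  have "a\<^sup>2 < r\<^sup>2" using True assms by (intro power_strict_mono) auto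
  thus ?thesis using True by (simp add: circle_bound_def)
qed (simp add: circle_bound_def)

lemma circle_bound_le_gap:
  assumes a: "0 \<le> a" and d: "0 < d" and gap: "a < 1 \<or> 1 + 2 * d \<le> a"
    and r: "1 < r" "r < 1 + d"
  shows "circle_bound r a \<le> (if a < 1 then 2 * pi / (1 - a\<^sup>2) else 2 * pi / d\<^sup>2)"
    and "circle_bound r a \<le> 2 * pi / (r\<^sup>2 - 1) + 2 * pi / d\<^sup>2"
proof -
  have r2: "1 < r\<^sup>2" using r by (simp add: one_less_power)
  have inside: "2 * pi / (r\<^sup>2 - a\<^sup>2) \<le> 2 * pi / (c - a\<^sup>2)" if "a < 1" "c \<le> r\<^sup>2" "1 \<le> c" for c
  proof -
    have "a\<^sup>2 < 1" using that a by (simp add: power_less_one_iff abs_square_less_1)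
    thus ?thesis using that by (intro divide_left_mono mult_pos_pos) auto
  qed
  have outside: "2 * pi / (a - r)\<^sup>2 \<le> 2 * pi / d\<^sup>2" if "\<not> a < 1"
  proof -
    have "d \<le> a - r" using gap that r by simp
    thus ?thesis using d by (intro divide_left_mono mult_pos_pos power_mono) auto
  qed
  show "circle_bound r a \<le> (if a < 1 then 2 * pi / (1 - a\<^sup>2) else 2 * pi / d\<^sup>2)"
    using inside[of 1] outside r2 by (simp add: circle_bound_def)
  have "2 * pi / (r\<^sup>2 - a\<^sup>2) \<le> 2 * pi / (r\<^sup>2 - 1)" if "a < 1"
  proof -
    have "a\<^sup>2 \<le> 1" using that a by (simp add: power_le_one)
    thus ?thesis using r2 by (intro divide_left_mono mult_pos_pos) auto
  qed
  thus "circle_bound r a \<le> 2 * pi / (r\<^sup>2 - 1) + 2 * pi / d\<^sup>2"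
    using outside r2 d by (auto simp: circle_bound_def add_increasing add_increasing2)
qed

lemma integral_nonneg_unconditional:
  fixes f :: "real \<Rightarrow> real"
  assumes "\<And>x. x \<in> S \<Longrightarrow> 0 \<le> f x"
  shows "0 \<le> integral S f"
  using assms integral_nonneg not_integrable_integral by (metis order_refl)

lemma integral_le_integrable_majorant:
  fixes f g :: "real \<Rightarrow> real"
  assumes g: "g integrable_on S" and le: "\<And>x. x \<in> S \<Longrightarrow> f x \<le> g x"
    and nonneg: "\<And>x. x \<in> S \<Longrightarrow> 0 \<le> g x"
  shows "integral S f \<le> integral S g"
proof (cases "f integrable_on S")
  case True thus ?thesis using g le by (rule integral_le)
next
  case False thus ?thesis using integral_nonneg[OF g nonneg] by (simp add: not_integrable_integral)
qed

lemma integral_suminf_le: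
  fixes k :: "nat \<Rightarrow> real \<Rightarrow> real" and c J :: "nat \<Rightarrow> real"
  assumes cont: "\<And>n. continuous_on {a..b} (k n)" and k: "\<And>n t. 0 \<le> k n t"
    and c: "\<And>n. 0 \<le> c n" and J: "\<And>n. integral {a..b} (k n) \<le> J n"
    and summable_J: "summable (\<lambda>n. c n * J n)"
    and summable_k: "\<And>t. summable (\<lambda>n. c n * k n t)"
  shows "(\<lambda>t. \<Sum>n. c n * k n t) integrable_on {a..b}"
    and "integral {a..b} (\<lambda>t. \<Sum>n. c n * k n t) \<le> (\<Sum>n. c n * J n)"
proof -
  define f where "f N t = (\<Sum>n<N. c n * k n t)" for N t
  have f_int: "f N integrable_on {a..b}" for N
    unfolding f_def by (intro integrable_continuous_interval continuous_intros cont)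
  have J_nonneg: "0 \<le> J n" for n
    using J[of n] integral_nonneg_unconditional[of "{a..b}" "k n"] k by force
  have f_bound: "integral {a..b} (f N) \<le> (\<Sum>n. c n * J n)" for N
  proof -
    have "integral {a..b} (f N) = (\<Sum>n<N. c n * integral {a..b} (k n))"
      unfolding f_def
      by (subst integral_sum) (auto intro!: integrable_continuous_interval continuous_intros cont)
    also have "\<dots> \<le> (\<Sum>n<N. c n * J n)" by (intro sum_mono mult_left_mono J c)
    also have "\<dots> \<le> (\<Sum>n. c n * J n)"
      by (intro sum_le_suminf summable_J) (auto intro: mult_nonneg_nonneg c J_nonneg)
    finally show ?thesis .
  qed
  have "0 \<le> integral {a..b} (f N)" for N
    by (rule integral_nonneg_unconditional) (auto simp: f_def c k intro!: sum_nonneg)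
  hence "bounded (range (\<lambda>N. integral {a..b} (f N)))"
    unfolding bounded_real using f_bound by (intro exI[of _ "\<Sum>n. c n * J n"]) auto
  moreover have "f N t \<le> f (Suc N) t" for N t by (simp add: f_def c k)
  moreover have "(\<lambda>N. f N t) \<longlonglongrightarrow> (\<Sum>n. c n * k n t)" for t
    unfolding f_def by (intro summable_LIMSEQ summable_k)
  ultimately have "(\<lambda>t. \<Sum>n. c n * k n t) integrable_on {a..b} \<and>
      (\<lambda>N. integral {a..b} (f N)) \<longlonglongrightarrow> integral {a..b} (\<lambda>t. \<Sum>n. c n * k n t)"
    by (intro monotone_convergence_increasing[OF f_int]) auto
  thus "(\<lambda>t. \<Sum>n. c n * k n t) integrable_on {a..b}"
    and "integral {a..b} (\<lambda>t. \<Sum>n. c n * k n t) \<le> (\<Sum>n. c n * J n)"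
    using f_bound by (auto intro: LIMSEQ_le_const2)
qed

section \<open>Resolvents of diagonal operators on circles\<close>

lemma circle_separation:
  assumes z: "cmod z = r" and r: "1 < r" "r < 1 + d" and gap: "cmod \<zeta> < 1 \<or> 1 + 2 * d \<le> cmod \<zeta>"
  shows "min (r - 1) d \<le> cmod (z - \<zeta>)"
  using gap r z norm_triangle_ineq2[of z \<zeta>] norm_triangle_ineq3[of z \<zeta>]
  by (auto simp: abs_le_iff min_le_iff_disj)

lemma summable_coeff_circle_bound:
  assumes R: "riesz_system \<Phi> \<Psi> m M"
    and d: "0 < d" and gap: "\<And>n. cmod (G n) < 1 \<or> 1 + 2 * d \<le> cmod (G n)"
    and r: "1 < r" "r < 1 + d"
  shows "summable (\<lambda>n. (cmod (cinner x (\<Psi> n)))\<^sup>2 * circle_bound r (cmod (G n)))"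
proof (rule summable_comparison_test'[where N=0])
  show "summable (\<lambda>n. (2 * pi / (r\<^sup>2 - 1) + 2 * pi / d\<^sup>2) * (cmod (cinner x (\<Psi> n)))\<^sup>2)"
    by (intro summable_mult riesz_systemD(4)[OF R])
  show "norm ((cmod (cinner x (\<Psi> n)))\<^sup>2 * circle_bound r (cmod (G n)))
      \<le> (2 * pi / (r\<^sup>2 - 1) + 2 * pi / d\<^sup>2) * (cmod (cinner x (\<Psi> n)))\<^sup>2" for n
    using circle_bound_le_gap(2)[OF norm_ge_zero d gap[of n] r]
      circle_bound_nonneg[OF norm_ge_zero[of "G n"] r(1)]
    by (simp add: abs_mult mult.commute[of _ "(cmod _)\<^sup>2"] mult_left_mono)
qed

lemma integral_norm_resolvent_diag_op_le:
  fixes \<Phi> \<Psi> :: "nat \<Rightarrow> 'a::chilbert"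
  assumes R: "riesz_system \<Phi> \<Psi> m M" and B: "\<And>n. cmod (G n) \<le> B"
    and d: "0 < d" and gap: "\<And>n. cmod (G n) < 1 \<or> 1 + 2 * d \<le> cmod (G n)"
    and r: "1 < r" "r < 1 + d"
  shows "summable (\<lambda>n. (cmod (cinner x (\<Psi> n)))\<^sup>2 * circle_bound r (cmod (G n)))"
    and "integral {0..2*pi} (\<lambda>\<theta>. (norm (resolvent (complex_of_real r * exp (\<i> * complex_of_real \<theta>))
              (diag_op G \<Phi> \<Psi>) x))\<^sup>2)
         \<le> M * (\<Sum>n. (cmod (cinner x (\<Psi> n)))\<^sup>2 * circle_bound r (cmod (G n)))"
proof -
  define c where "c n = (cmod (cinner x (\<Psi> n)))\<^sup>2" for n
  define z where "z \<theta> = complex_of_real r * exp (\<i> * complex_of_real \<theta>)" for \<theta>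
  define k where "k n \<theta> = 1 / (cmod (z \<theta> - G n))\<^sup>2" for n \<theta>
  define J where "J n = circle_bound r (cmod (G n))" for n
  have M: "0 < M" by (rule riesz_systemD(2)[OF R])
  have c: "0 \<le> c n" for n by (simp add: c_def)
  have off_circle: "cmod (G n) < 1 \<or> r < cmod (G n)" for n using gap[of n] r d by auto
  have sep: "min (r - 1) d \<le> cmod (z \<theta> - G n)" for \<theta> n
    using r by (intro circle_separation[OF _ r gap]) (simp add: z_def norm_mult)
  have sep_pos: "0 < min (r - 1) d" using r d by simp
  have "summable (\<lambda>n. c n * J n)"
    unfolding c_def J_def by (rule summable_coeff_circle_bound[OF R d gap r])
  moreover have "integral {0..2*pi} (\<lambda>\<theta>. (norm (resolvent (z \<theta>) (diag_op G \<Phi> \<Psi>) x))\<^sup>2)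
      \<le> M * (\<Sum>n. c n * J n)"
  proof -
    have summable_k: "summable (\<lambda>n. c n * k n \<theta>)"
      and pointwise: "(norm (resolvent (z \<theta>) (diag_op G \<Phi> \<Psi>) x))\<^sup>2 \<le> M * (\<Sum>n. c n * k n \<theta>)" for \<theta>
      using norm_resolvent_diag_op_le[OF R B sep_pos sep, where x=x] by (simp_all add: c_def k_def)
    have cont: "continuous_on {0..2*pi} (k n)" for n
      unfolding k_def z_def using off_circle[of n] r by (intro continuous_on_inverse_dist_circle) auto
    have "integral {0..2*pi} (k n) \<le> J n" for n
      unfolding k_def z_def J_def
      by (rule integral_inverse_dist_circle_le_circle_bound[OF r(1) off_circle])
    note series = integral_suminf_le[of 0 "2*pi" k c J, OF cont _ c this \<open>summable (\<lambda>n. c n * J n)\<close> summable_k]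
    have "integral {0..2*pi} (\<lambda>\<theta>. (norm (resolvent (z \<theta>) (diag_op G \<Phi> \<Psi>) x))\<^sup>2)
        \<le> integral {0..2*pi} (\<lambda>\<theta>. M * (\<Sum>n. c n * k n \<theta>))"
      using series(1) pointwise M summable_k c
      by (intro integral_le_integrable_majorant integrable_on_cmult_left suminf_nonneg
          mult_nonneg_nonneg) (auto simp: k_def)
    also have "\<dots> \<le> M * (\<Sum>n. c n * J n)"
      using series(2) M by (simp add: mult_left_mono k_def)
    finally show ?thesis .
  qed
  ultimately show "summable (\<lambda>n. (cmod (cinner x (\<Psi> n)))\<^sup>2 * circle_bound r (cmod (G n)))"
    and "integral {0..2*pi} (\<lambda>\<theta>. (norm (resolvent (complex_of_real r * exp (\<i> * complex_of_real \<theta>))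
              (diag_op G \<Phi> \<Psi>) x))\<^sup>2)
         \<le> M * (\<Sum>n. (cmod (cinner x (\<Psi> n)))\<^sup>2 * circle_bound r (cmod (G n)))"
    by (simp_all add: c_def J_def z_def)
qed

lemma suminf_tendsto_0_dominated:
  fixes f :: "nat \<Rightarrow> 'b \<Rightarrow> real"
  assumes dominated: "\<forall>\<^sub>F r in F. \<forall>n. 0 \<le> f n r \<and> f n r \<le> b n"
    and b: "summable b" and lim: "\<And>n. ((\<lambda>r. f n r) \<longlongrightarrow> 0) F"
  shows "((\<lambda>r. \<Sum>n. f n r) \<longlongrightarrow> 0) F"
proof (cases "F = bot")
  case False
  have "\<forall>\<^sub>F (n, r) in sequentially \<times>\<^sub>F F. \<forall>k. norm (f k r) \<le> b k"
    using dominated eventually_prod2[OF sequentially_bot, where B=F and P="\<lambda>r. \<forall>k. norm (f k r) \<le> b k"]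
    by (auto elim: eventually_mono)
  hence "\<forall>\<^sub>F (n, r) in sequentially \<times>\<^sub>F F. norm (f n r) \<le> b n"
    by (rule eventually_mono) auto
  from tannerys_theorem[OF lim this b False] show ?thesis by simp
qed simp

lemma eventually_at_right_1_interval:
  "0 < d \<Longrightarrow> \<forall>\<^sub>F r in at_right 1. 1 < r \<and> r < 1 + (d::real)"
  by (rule eventually_mono[OF eventually_at_right_real[of 1 "1 + d"]]) auto

lemma weighted_circle_bound_tendsto_0:
  assumes K: "(K \<longlongrightarrow> 0) (at_right 1)" "\<And>r. 1 < r \<Longrightarrow> r < 1 + d \<Longrightarrow> 0 \<le> K r"
    and a: "0 \<le> a" and d: "0 < d" and gap: "a < 1 \<or> 1 + 2 * d \<le> a"
  shows "((\<lambda>r. K r * circle_bound r a) \<longlongrightarrow> 0) (at_right 1)"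
proof -
  define Jb where "Jb = (if a < 1 then 2 * pi / (1 - a\<^sup>2) else 2 * pi / d\<^sup>2)"
  have bounds: "\<forall>\<^sub>F r in at_right 1. 0 \<le> K r * circle_bound r a \<and> K r * circle_bound r a \<le> K r * Jb"
    using eventually_at_right_1_interval[OF d]
  proof (rule eventually_mono)
    fix r assume r: "1 < r \<and> r < 1 + d"
    thus "0 \<le> K r * circle_bound r a \<and> K r * circle_bound r a \<le> K r * Jb"
      using K(2) circle_bound_nonneg[OF a] circle_bound_le_gap(1)[OF a d gap]
      by (auto simp: Jb_def mult_left_mono)
  qed
  have lower: "\<forall>\<^sub>F r in at_right 1. 0 \<le> K r * circle_bound r a"
    and upper: "\<forall>\<^sub>F r in at_right 1. K r * circle_bound r a \<le> K r * Jb"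
    using bounds by (rule eventually_mono, simp)+
  have "((\<lambda>r. K r * Jb) \<longlongrightarrow> 0) (at_right 1)" by (rule tendsto_mult_left_zero[OF K(1)])
  from tendsto_sandwich[OF lower upper tendsto_const this] show ?thesis .
qed

lemma weighted_integral_norm_resolvent_diag_op_tendsto_0:
  fixes \<Phi> \<Psi> :: "nat \<Rightarrow> 'a::chilbert" and K :: "real \<Rightarrow> real"
  assumes R: "riesz_system \<Phi> \<Psi> m M" and B: "\<And>n. cmod (G n) \<le> B"
    and d: "0 < d" and gap: "\<And>n. cmod (G n) < 1 \<or> 1 + 2 * d \<le> cmod (G n)"
    and K: "(K \<longlongrightarrow> 0) (at_right 1)" "\<And>r. 1 < r \<Longrightarrow> r < 1 + d \<Longrightarrow> 0 \<le> K r"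
    and dominated: "\<And>r n. 1 < r \<Longrightarrow> r < 1 + d \<Longrightarrow> K r * circle_bound r (cmod (G n)) \<le> D n"
    and summable_D: "summable (\<lambda>n. (cmod (cinner x (\<Psi> n)))\<^sup>2 * D n)"
  shows "((\<lambda>r. K r * integral {0..2*pi} (\<lambda>\<theta>. (norm (resolvent (complex_of_real r * exp (\<i> * complex_of_real \<theta>))
              (diag_op G \<Phi> \<Psi>) x))\<^sup>2)) \<longlongrightarrow> 0) (at_right 1)"
proof -
  define c where "c n = (cmod (cinner x (\<Psi> n)))\<^sup>2" for n
  define h where "h r n = c n * (K r * circle_bound r (cmod (G n)))" for r n
  define Q where "Q r = K r * integral {0..2*pi} (\<lambda>\<theta>. (norm (resolvent (complex_of_real r * exp (\<i> * complex_of_real \<theta>))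
              (diag_op G \<Phi> \<Psi>) x))\<^sup>2)" for r
  have M: "0 < M" by (rule riesz_systemD(2)[OF R])
  note near = eventually_at_right_1_interval[OF d]
  have h: "0 \<le> h r n" "h r n \<le> c n * D n" if "1 < r" "r < 1 + d" for r n
    using K(2)[OF that] circle_bound_nonneg[OF norm_ge_zero[of "G n"] that(1)]
      dominated[OF that, of n] unfolding h_def c_def by (simp_all add: mult_left_mono)
  have Q_upper: "Q r \<le> M * (\<Sum>n. h r n)" if r: "1 < r" "r < 1 + d" for r
  proof -
    note estimate = integral_norm_resolvent_diag_op_le[OF R B d gap r, where x=x]
    have "Q r \<le> K r * (M * (\<Sum>n. c n * circle_bound r (cmod (G n))))"
      unfolding Q_def c_def using estimate(2) K(2)[OF r] by (rule mult_left_mono)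
    also have "\<dots> = M * (\<Sum>n. h r n)"
      using suminf_mult[OF estimate(1), of "K r"] unfolding h_def c_def by (simp add: algebra_simps)
    finally show ?thesis .
  qed
  have Q_lower: "0 \<le> Q r" if "1 < r" "r < 1 + d" for r
    unfolding Q_def using K(2)[OF that] by (intro mult_nonneg_nonneg integral_nonneg_unconditional) auto
  have "((\<lambda>r. h r n) \<longlongrightarrow> 0) (at_right 1)" for n
    unfolding h_def
    by (intro tendsto_mult_right_zero weighted_circle_bound_tendsto_0[OF K norm_ge_zero d gap])
  moreover have "\<forall>\<^sub>F r in at_right 1. \<forall>n. 0 \<le> h r n \<and> h r n \<le> c n * D n"
    using near by (rule eventually_mono) (simp add: h)
  ultimately have "((\<lambda>r. \<Sum>n. h r n) \<longlongrightarrow> 0) (at_right 1)"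
    using summable_D unfolding c_def by (intro suminf_tendsto_0_dominated) auto
  from tendsto_mult_left[OF this, of M]
  have upper: "((\<lambda>r. M * (\<Sum>n. h r n)) \<longlongrightarrow> 0) (at_right 1)" by simp
  have "\<forall>\<^sub>F r in at_right 1. 0 \<le> Q r" "\<forall>\<^sub>F r in at_right 1. Q r \<le> M * (\<Sum>n. h r n)"
    using near by (auto elim!: eventually_mono intro: Q_lower Q_upper)
  from tendsto_sandwich[OF this tendsto_const upper] have "(Q \<longlongrightarrow> 0) (at_right 1)" .
  thus ?thesis unfolding Q_def[abs_def] .
qed

section \<open>The weights \<open>r - 1\<close> and \<open>\<Lambda>\<^sub>s(r)\<close>\<close>

lemma Lambda_tendsto_0:
  assumes "0 < s" "s \<le> 1/2"
  shows "(Lambda s \<longlongrightarrow> 0) (at_right 1)"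
proof (cases "s < 1/2")
  case True
  have "((\<lambda>r::real. r - 1) \<longlongrightarrow> 1 - 1) (at_right 1)" by (intro tendsto_intros)
  hence "((\<lambda>r::real. r - 1) \<longlongrightarrow> 0) (at_right 1)" by simp
  moreover have "\<forall>\<^sub>F r in at_right 1. 0 \<le> r - (1::real)"
    using eventually_at_right_less[of "1::real"] by (rule eventually_mono) simp
  ultimately have "((\<lambda>r. (r - 1) powr (1 - 2 * s)) \<longlongrightarrow> 0) (at_right 1)"
    using True by (intro tendsto_zero_powrI tendsto_const) auto
  thus ?thesis using True by (simp add: Lambda_def[abs_def])
next
  case False
  have "filterlim (\<lambda>r. ln (r - 1)) at_bot (at_right (1::real))"
    by (subst filterlim_at_right_to_0) (simp add: ln_at_0)
  hence to_top: "filterlim (\<lambda>r. - ln (r - 1)) at_top (at_right (1::real))"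
    by (simp add: filterlim_uminus_at_top)
  hence "\<forall>\<^sub>F r in at_right (1::real). 0 \<le> - ln (r - 1)" unfolding filterlim_at_top by blast
  hence "\<forall>\<^sub>F r in at_right (1::real). inverse (- ln (r - 1)) = 1 / \<bar>ln (r - 1)\<bar>"
    by (rule eventually_mono) (simp add: inverse_eq_divide)
  from Lim_transform_eventually[OF tendsto_inverse_0_at_top[OF to_top] this]
  have "((\<lambda>r. 1 / \<bar>ln (r - 1)\<bar>) \<longlongrightarrow> 0) (at_right (1::real))" .
  thus ?thesis using False by (simp add: Lambda_def[abs_def])
qed

lemma Lambda_nonneg: "0 \<le> Lambda s r"
  by (simp add: Lambda_def)

lemma Lambda_le_one:
  assumes r: "1 < r" "r - 1 < exp (-1)"
  shows "Lambda s r \<le> 1"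
proof (cases "s < 1/2")
  case True
  have "exp (-1) < (1::real)" by simp
  hence "r \<le> 2" using r by linarith
  hence "(r - 1) powr (1 - 2 * s) \<le> 1" using r True by (intro powr_le1) auto
  thus ?thesis using True by (simp add: Lambda_def)
next
  case False
  have "ln (r - 1) < ln (exp (-1))" using r by (subst ln_less_cancel_iff) auto
  hence "1 \<le> \<bar>ln (r - 1)\<bar>" by simp
  thus ?thesis using False by (simp add: Lambda_def)
qed

lemma one_minus_exp_neg_ge:
  fixes x :: real
  assumes "0 \<le> x" "x \<le> 1"
  shows "x / 2 \<le> 1 - exp (- x)"
proof -
  have "exp (-x) * (1 + x) \<le> exp (-x) * exp x" by (intro mult_left_mono) auto
  hence "exp (-x) * (1 + x) \<le> 1" by (simp add: exp_minus)
  moreover have "1 \<le> (1 - x / 2) * (1 + x)"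
    using assms mult_left_le_one_le[of x x] by (simp add: field_simps)
  ultimately have "exp (-x) * (1 + x) \<le> (1 - x / 2) * (1 + x)" by linarith
  thus ?thesis using assms by (simp add: mult_le_cancel_right)
qed

lemma Lambda_div_le_powr:
  assumes s: "0 < s" "s \<le> 1/2" and r: "1 < r" "r - 1 < exp (-1)" and x: "0 < x"
  shows "Lambda s r / ((r - 1) + x / 2) \<le> 2 / x powr (2 * s)"
proof -
  have "Lambda s r * x powr (2 * s) \<le> (r - 1) + x"
  proof (cases "s < 1/2")
    case True
    \<comment> \<open>Young's inequality with the conjugate exponents \<open>1 / (1 - 2s)\<close> and \<open>1 / (2s)\<close>\<close>
    have "(r - 1) powr (1 - 2 * s) * x powr (2 * s) \<le> (1 - 2 * s) * (r - 1) + 2 * s * x"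
      by (rule Youngs_inequality_0) (use True s r x in auto)
    also have "\<dots> \<le> 1 * (r - 1) + 1 * x"
      using s r x by (intro add_mono mult_right_mono) auto
    finally show ?thesis using True by (simp add: Lambda_def)
  next
    case False
    hence "2 * s = 1" using s by simp
    hence "Lambda s r * x powr (2 * s) = Lambda s r * x" using x by simp
    also have "\<dots> \<le> x" using Lambda_le_one[OF r] Lambda_nonneg x by (simp add: mult_left_le_one_le)
    finally show ?thesis using r by simp
  qed
  hence "Lambda s r * x powr (2 * s) \<le> 2 * ((r - 1) + x / 2)" using r by simp
  thus ?thesis using r x by (simp add: field_simps)
qed

lemma Re_neg_if_outside_exceptional:
  assumes "0 < \<omega>" "0 < \<Upsilon>" "Re l \<le> - \<omega> \<or> l \<in> Omega \<alpha> \<Upsilon>"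
  shows "Re l < 0"
proof (cases "Re l \<le> - \<omega>")
  case False
  hence "Im l \<noteq> 0" and "Re l \<le> - \<Upsilon> / (\<bar>Im l\<bar> powr \<alpha>)"
    using assms(3) unfolding Omega_def by auto
  moreover from this have "0 < \<Upsilon> / (\<bar>Im l\<bar> powr \<alpha>)" using assms(2) by simp
  ultimately show ?thesis by simp
qed (use assms in simp)

lemma Lambda_div_le_left_half_plane:
  assumes \<omega>: "0 < \<omega>" and \<tau>: "0 < \<tau>" and \<delta>: "0 \<le> \<delta>" and l: "Re l \<le> - \<omega>"
    and r: "1 < r" "r - 1 < exp (-1)"
  shows "Lambda s r / (r - exp (\<tau> * Re l))
           \<le> cmod l powr (2 * \<delta>) / ((1 - exp (- \<tau> * \<omega>)) * \<omega> powr (2 * \<delta>))"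
proof -
  have E: "0 < 1 - exp (- \<tau> * \<omega>)" using \<omega> \<tau> by simp
  have "\<tau> * Re l \<le> \<tau> * (- \<omega>)" using l \<tau> by (intro mult_left_mono) auto
  hence "exp (\<tau> * Re l) \<le> exp (- \<tau> * \<omega>)" by simp
  hence "1 - exp (- \<tau> * \<omega>) \<le> r - exp (\<tau> * Re l)" using r by linarith
  hence "Lambda s r / (r - exp (\<tau> * Re l)) \<le> 1 / (1 - exp (- \<tau> * \<omega>))"
    using Lambda_nonneg Lambda_le_one[OF r] E by (intro frac_le) auto
  also have "\<dots> = \<omega> powr (2 * \<delta>) / ((1 - exp (- \<tau> * \<omega>)) * \<omega> powr (2 * \<delta>))"
    using \<omega> by simp
  also have "\<dots> \<le> cmod l powr (2 * \<delta>) / ((1 - exp (- \<tau> * \<omega>)) * \<omega> powr (2 * \<delta>))"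
    using l abs_Re_le_cmod[of l] \<omega> \<delta> E by (intro divide_right_mono powr_mono2) auto
  finally show ?thesis .
qed

lemma Lambda_div_le_exp_gap:
  assumes s: "0 < s" "s \<le> 1/2" and r: "1 < r" "r - 1 < exp (-1)" and x: "0 < x"
    and q: "(r - 1) + (1 - exp (- x)) \<le> q"
  shows "Lambda s r / q \<le> 2 / min 1 x powr (2 * s)"
proof (cases "1 \<le> x")
  case True
  have "exp (- x) \<le> exp (-1)" using True by simp
  moreover have "exp (-1::real) \<le> 1/2"
    using exp_ge_add_one_self[of "1::real"] by (simp add: exp_minus field_simps)
  ultimately have "1/2 \<le> q" using q r by linarith
  hence "Lambda s r / q \<le> 1 / (1/2)"
    using Lambda_nonneg Lambda_le_one[OF r] by (intro frac_le) auto
  thus ?thesis using True by simp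
next
  case False
  have "(r - 1) + x / 2 \<le> q" using q one_minus_exp_neg_ge[of x] False x by linarith
  hence "Lambda s r / q \<le> Lambda s r / ((r - 1) + x / 2)"
    using Lambda_nonneg r x by (intro divide_left_mono) auto
  also have "\<dots> \<le> 2 / x powr (2 * s)" by (rule Lambda_div_le_powr[OF s r x])
  finally show ?thesis using False by simp
qed

lemma Lambda_div_le_Omega:
  assumes \<alpha>: "0 < \<alpha>" and \<Upsilon>: "0 < \<Upsilon>" and \<tau>: "0 < \<tau>" and \<delta>: "0 < \<delta>" "\<delta> \<le> \<alpha> / 2"
    and l: "l \<in> Omega \<alpha> \<Upsilon>" and r: "1 < r" "r - 1 < exp (-1)"
  shows "Lambda (\<delta> / \<alpha>) r / (r - exp (\<tau> * Re l))
           \<le> (2 * \<tau> powr (2 * \<delta>) + 2 / (\<tau> * \<Upsilon>) powr (2 * (\<delta> / \<alpha>))) * cmod l powr (2 * \<delta>)"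
proof -
  define s where "s = \<delta> / \<alpha>"
  define t where "t = \<bar>Im l\<bar>"
  define x where "x = \<tau> * \<Upsilon> / t powr \<alpha>"
  have s: "0 < s" "s \<le> 1/2" using \<delta> \<alpha> by (auto simp: s_def field_simps)
  have t: "0 < t" "t \<le> cmod l" using l abs_Im_le_cmod[of l] unfolding Omega_def t_def by auto
  have x: "0 < x" using t \<tau> \<Upsilon> by (simp add: x_def)
  have Re_l: "x \<le> - \<tau> * Re l"
    using l \<tau> mult_left_mono[of "Re l" "- \<Upsilon> / t powr \<alpha>" \<tau>] unfolding Omega_def t_def x_def by auto
  hence "Lambda s r / (r - exp (\<tau> * Re l)) \<le> 2 / min 1 x powr (2 * s)"
    by (intro Lambda_div_le_exp_gap[OF s r x]) simp
  also have "\<dots> \<le> (2 * \<tau> powr (2 * \<delta>) + 2 / (\<tau> * \<Upsilon>) powr (2 * s)) * cmod l powr (2 * \<delta>)"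
  proof (cases "1 \<le> x")
    case True
    \<comment> \<open>here \<open>1 \<le> x \<le> -\<tau> Re l \<le> \<tau> |l|\<close>\<close>
    have "- Re l \<le> cmod l" using abs_Re_le_cmod[of l] by linarith
    hence "\<tau> * (- Re l) \<le> \<tau> * cmod l" using \<tau> by (intro mult_left_mono) auto
    hence "1 \<le> \<tau> * cmod l" using True Re_l by linarith
    hence "1 \<le> (\<tau> * cmod l) powr (2 * \<delta>)" using \<delta> by (intro ge_one_powr_ge_zero) auto
    hence "1 \<le> \<tau> powr (2 * \<delta>) * cmod l powr (2 * \<delta>)" using \<tau> by (simp add: powr_mult)
    moreover have "0 \<le> 2 / (\<tau> * \<Upsilon>) powr (2 * s) * cmod l powr (2 * \<delta>)" by simp
    ultimately have "2 \<le> 2 * (\<tau> powr (2 * \<delta>) * cmod l powr (2 * \<delta>))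
        + 2 / (\<tau> * \<Upsilon>) powr (2 * s) * cmod l powr (2 * \<delta>)" by linarith
    thus ?thesis using True by (simp add: distrib_right mult.assoc)
  next
    case False
    have "x powr (2 * s) = (\<tau> * \<Upsilon>) powr (2 * s) / t powr (2 * \<delta>)"
      unfolding x_def using \<tau> \<Upsilon> t \<alpha> by (simp add: powr_divide powr_powr s_def)
    hence "2 / min 1 x powr (2 * s) = 2 / (\<tau> * \<Upsilon>) powr (2 * s) * t powr (2 * \<delta>)"
      using False by simp
    also have "\<dots> \<le> 2 / (\<tau> * \<Upsilon>) powr (2 * s) * cmod l powr (2 * \<delta>)"
      using t \<delta> by (intro mult_left_mono powr_mono2) auto
    also have "\<dots> \<le> 2 * \<tau> powr (2 * \<delta>) * cmod l powr (2 * \<delta>) + 2 / (\<tau> * \<Upsilon>) powr (2 * s) * cmod l powr (2 * \<delta>)"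
      by simp
    finally show ?thesis by (simp add: distrib_right)
  qed
  finally show ?thesis by (simp add: s_def)
qed

lemma Lambda_circle_bound_le_powr:
  assumes \<omega>: "0 < \<omega>" and \<alpha>: "0 < \<alpha>" and \<Upsilon>: "0 < \<Upsilon>" and \<tau>: "0 < \<tau>"
    and \<delta>: "0 < \<delta>" "\<delta> \<le> \<alpha> / 2"
  obtains C where "\<And>l r. Re l \<le> - \<omega> \<or> l \<in> Omega \<alpha> \<Upsilon> \<Longrightarrow> 1 < r \<Longrightarrow> r - 1 < exp (-1) \<Longrightarrow>
    Lambda (\<delta> / \<alpha>) r * circle_bound r (exp (\<tau> * Re l)) \<le> C * cmod l powr (2 * \<delta>)"
proof
  define A where "A = 1 / ((1 - exp (- \<tau> * \<omega>)) * \<omega> powr (2 * \<delta>))"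
  define B where "B = 2 * \<tau> powr (2 * \<delta>) + 2 / (\<tau> * \<Upsilon>) powr (2 * (\<delta> / \<alpha>))"
  fix l :: complex and r :: real
  assume l: "Re l \<le> - \<omega> \<or> l \<in> Omega \<alpha> \<Upsilon>" and r: "1 < r" "r - 1 < exp (-1)"
  define e where "e = exp (\<tau> * Re l)"
  have e: "0 < e" "e < 1"
    using Re_neg_if_outside_exceptional[OF \<omega> \<Upsilon> l] \<tau> by (auto simp: e_def mult_pos_neg)
  have AB: "0 \<le> A" "0 \<le> B" using \<omega> \<tau> by (simp_all add: A_def B_def)
  have quotient: "Lambda (\<delta> / \<alpha>) r / (r - e) \<le> (A + B) * cmod l powr (2 * \<delta>)"
  proof (cases "Re l \<le> - \<omega>")
    case True
    with Lambda_div_le_left_half_plane[OF \<omega> \<tau> _ True r, of \<delta> "\<delta> / \<alpha>"] AB \<delta>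
    show ?thesis by (simp add: e_def A_def distrib_right add_increasing2)
  next
    case False
    hence "Lambda (\<delta> / \<alpha>) r / (r - e) \<le> B * cmod l powr (2 * \<delta>)"
      unfolding e_def B_def using Lambda_div_le_Omega[OF \<alpha> \<Upsilon> \<tau> \<delta> _ r] l by blast
    moreover have "0 \<le> A * cmod l powr (2 * \<delta>)" using AB by simp
    ultimately show ?thesis by (simp add: distrib_right)
  qed
  \<comment> \<open>inside the unit disc, \<open>r\<^sup>2 - e\<^sup>2 = (r - e)(r + e) \<ge> r - e\<close>\<close>
  have "r - e \<le> r\<^sup>2 - e\<^sup>2"
    using e r mult_left_mono[of 1 "r + e" "r - e"] by (simp add: power2_eq_square algebra_simps)
  hence "circle_bound r e \<le> 2 * pi / (r - e)"
    using e r by (simp add: circle_bound_def divide_left_mono)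
  hence "Lambda (\<delta> / \<alpha>) r * circle_bound r e \<le> Lambda (\<delta> / \<alpha>) r * (2 * pi / (r - e))"
    using Lambda_nonneg by (rule mult_left_mono)
  also have "\<dots> = 2 * pi * (Lambda (\<delta> / \<alpha>) r / (r - e))" by simp
  also have "\<dots> \<le> 2 * pi * ((A + B) * cmod l powr (2 * \<delta>))"
    using quotient by (rule mult_left_mono) simp
  also have "\<dots> = 2 * pi * (A + B) * cmod l powr (2 * \<delta>)" by (simp only: mult.assoc)
  finally show "Lambda (\<delta> / \<alpha>) r * circle_bound r (exp (\<tau> * Re l))
      \<le> 2 * pi * (A + B) * cmod l powr (2 * \<delta>)"
    by (simp add: e_def)
qed

lemma shifted_circle_bound_le:
  assumes a: "0 \<le> a" and d: "0 < d" "d \<le> 1/2" and gap: "a < 1 \<or> 1 + 2 * d \<le> a"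
    and r: "1 < r" "r < 1 + d"
  shows "(r - 1) * circle_bound r a \<le> pi + 2 * pi / d\<^sup>2"
proof (cases "a < 1")
  case True
  have "a\<^sup>2 \<le> 1" using True a by (simp add: power_le_one)
  moreover have "2 * (r - 1) \<le> r\<^sup>2 - 1" using zero_le_power2[of "r - 1"] by (simp add: power2_eq_square algebra_simps)
  ultimately have "(r - 1) * (2 * pi / (r\<^sup>2 - a\<^sup>2)) \<le> (r - 1) * (2 * pi / (2 * (r - 1)))"
    using r by (intro mult_left_mono divide_left_mono mult_pos_pos) auto
  also have "\<dots> = pi" using r by (simp add: field_simps)
  finally have "(r - 1) * circle_bound r a \<le> pi" using True by (simp add: circle_bound_def)
  moreover have "0 \<le> 2 * pi / d\<^sup>2" by simp
  ultimately show ?thesis by linarith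
next
  case False
  have "circle_bound r a \<le> 2 * pi / d\<^sup>2"
    using circle_bound_le_gap(1)[OF a d(1) gap r] False by simp
  hence "(r - 1) * circle_bound r a \<le> 1 * (2 * pi / d\<^sup>2)"
    using r d circle_bound_nonneg[OF a r(1)] by (intro mult_mono) auto
  moreover have "0 \<le> pi" by simp
  ultimately show ?thesis by linarith
qed

section \<open>Riesz-spectral semigroups\<close>

lemma finite_gap_above_one:
  fixes a :: "'b \<Rightarrow> real"
  assumes "finite {n. 1 < a n}"
  obtains d where "0 < d" "\<And>n. 1 < a n \<Longrightarrow> 1 + 2 * d \<le> a n"
proof (cases "{n. 1 < a n} = {}")
  case False
  let ?d = "Min ((\<lambda>n. (a n - 1) / 2) ` {n. 1 < a n})"
  have "0 < ?d" using assms False by simp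
  moreover have "1 + 2 * ?d \<le> a n" if "1 < a n" for n
    using Min_le[OF finite_imageI[OF assms] imageI, of n "\<lambda>n. (a n - 1) / 2"] that by simp
  ultimately show ?thesis by (rule that)
qed (use that[of 1] in auto)

lemma bounded_outside_finite:
  fixes a :: "'b \<Rightarrow> real"
  assumes "finite F" "\<And>n. n \<notin> F \<Longrightarrow> a n \<le> c"
  obtains B where "\<And>n. a n \<le> B"
proof
  fix n
  have finite: "finite (insert c (a ` F))" using assms(1) by simp
  show "a n \<le> Max (insert c (a ` F))"
  proof (cases "n \<in> F")
    case False
    thus ?thesis using Max_ge[OF finite, of c] assms(2) by fastforce
  qed (simp add: Max_ge[OF finite])
qed

lemma exp_spectrum_gap:
  fixes lam :: "nat \<Rightarrow> complex"
  assumes fin: "finite {n. Re (lam n) > - \<omega> \<and> lam n \<notin> Omega \<alpha> \<Upsilon>}"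
    and \<omega>: "0 < \<omega>" and \<Upsilon>: "0 < \<Upsilon>" and A2: "\<forall>n. Re (lam n) \<noteq> 0" and \<tau>: "0 < \<tau>"
  obtains d B where "0 < d" "d \<le> exp (-1) / 2" "\<And>n. exp (\<tau> * Re (lam n)) \<le> B"
    "\<And>n. exp (\<tau> * Re (lam n)) < 1 \<or> 1 + 2 * d \<le> exp (\<tau> * Re (lam n))"
proof -
  define a where "a n = exp (\<tau> * Re (lam n))" for n
  define F where "F = {n. Re (lam n) > - \<omega> \<and> lam n \<notin> Omega \<alpha> \<Upsilon>}"
  have small: "a n < 1" if "n \<notin> F" for n
    using Re_neg_if_outside_exceptional[OF \<omega> \<Upsilon>, of "lam n" \<alpha>] that \<tau>
    by (auto simp: F_def a_def mult_pos_neg)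
  have finite_F: "finite F" using fin by (simp add: F_def)
  obtain B where B: "\<And>n. a n \<le> B"
    using bounded_outside_finite[OF finite_F, of a 1] small less_imp_le by blast
  have "finite {n. 1 < a n}" by (rule finite_subset[OF _ finite_F]) (use small in force)
  then obtain d0 where d0: "0 < d0" "\<And>n. 1 < a n \<Longrightarrow> 1 + 2 * d0 \<le> a n"
    by (rule finite_gap_above_one) blast
  define d where "d = min d0 (exp (-1) / 2)"
  have gap: "a n < 1 \<or> 1 + 2 * d \<le> a n" for n
  proof (cases "1 < a n")
    case True
    moreover have "d \<le> d0" by (simp add: d_def)
    ultimately show ?thesis using d0(2) by fastforce
  next
    case False
    moreover have "a n \<noteq> 1" using A2 \<tau> by (simp add: a_def)
    ultimately show ?thesis by simp
  qed
  show ?thesis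
  proof (rule that)
    show "0 < d" "d \<le> exp (-1) / 2" using d0(1) by (simp_all add: d_def)
  qed (use B gap in \<open>simp_all add: a_def\<close>)
qed

lemma diag_op_shifted_resolvent_tendsto_0:
  fixes \<Phi> \<Psi> :: "nat \<Rightarrow> 'a::chilbert"
  assumes R: "riesz_system \<Phi> \<Psi> m M" and B: "\<And>n. cmod (G n) \<le> B"
    and d: "0 < d" "d \<le> 1/2" and gap: "\<And>n. cmod (G n) < 1 \<or> 1 + 2 * d \<le> cmod (G n)"
  shows "((\<lambda>r. (r - 1) * integral {0..2*pi} (\<lambda>\<theta>. (norm (resolvent (complex_of_real r * exp (\<i> * complex_of_real \<theta>))
              (diag_op G \<Phi> \<Psi>) x))\<^sup>2)) \<longlongrightarrow> 0) (at_right 1)"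
proof (rule weighted_integral_norm_resolvent_diag_op_tendsto_0[OF R B d(1) gap])
  have "((\<lambda>r::real. r - 1) \<longlongrightarrow> 1 - 1) (at_right 1)" by (intro tendsto_intros)
  thus "((\<lambda>r::real. r - 1) \<longlongrightarrow> 0) (at_right 1)" by simp
  show "(r - 1) * circle_bound r (cmod (G n)) \<le> pi + 2 * pi / d\<^sup>2" if "1 < r" "r < 1 + d" for r n
    using shifted_circle_bound_le[OF norm_ge_zero d gap that] .
  show "summable (\<lambda>n. (cmod (cinner x (\<Psi> n)))\<^sup>2 * (pi + 2 * pi / d\<^sup>2))"
    by (intro summable_mult2 riesz_systemD(4)[OF R])
qed simp

lemma diag_op_Lambda_resolvent_tendsto_0:
  fixes \<Phi> \<Psi> :: "nat \<Rightarrow> 'a::chilbert" and lam :: "nat \<Rightarrow> complex"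
  assumes R: "riesz_system \<Phi> \<Psi> m M" and B: "\<And>n. cmod (G n) \<le> B"
    and d: "0 < d" "d \<le> exp (-1) / 2" and gap: "\<And>n. cmod (G n) < 1 \<or> 1 + 2 * d \<le> cmod (G n)"
    and G: "\<And>n. cmod (G n) = exp (\<tau> * Re (lam n))"
    and A1: "0 < \<omega>" "0 < \<alpha>" "0 < \<Upsilon>" "finite {n. Re (lam n) > - \<omega> \<and> lam n \<notin> Omega \<alpha> \<Upsilon>}"
    and \<tau>: "0 < \<tau>" and \<delta>: "0 < \<delta>" "\<delta> \<le> \<alpha> / 2"
    and x: "summable (\<lambda>n. cmod (lam n) powr (2 * \<delta>) * (cmod (cinner x (\<Psi> n)))\<^sup>2)"
  shows "((\<lambda>r. Lambda (\<delta> / \<alpha>) r * integral {0..2*pi} (\<lambda>\<theta>. (norm (resolvent (complex_of_real r * exp (\<i> * complex_of_real \<theta>))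
              (diag_op G \<Phi> \<Psi>) x))\<^sup>2)) \<longlongrightarrow> 0) (at_right 1)"
proof -
  define F where "F = {n. Re (lam n) > - \<omega> \<and> lam n \<notin> Omega \<alpha> \<Upsilon>}"
  obtain C where C: "\<And>l r. Re l \<le> - \<omega> \<or> l \<in> Omega \<alpha> \<Upsilon> \<Longrightarrow> 1 < r \<Longrightarrow> r - 1 < exp (-1) \<Longrightarrow>
      Lambda (\<delta> / \<alpha>) r * circle_bound r (exp (\<tau> * Re l)) \<le> C * cmod l powr (2 * \<delta>)"
    using Lambda_circle_bound_le_powr[OF A1(1-3) \<tau> \<delta>] by blast
  \<comment> \<open>the finitely many exceptional eigenvalues are dominated by the crude bound of \<open>circle_bound_le_gap\<close>\<close>
  define D where "D n = (if n \<in> F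
      then (if cmod (G n) < 1 then 2 * pi / (1 - (cmod (G n))\<^sup>2) else 2 * pi / d\<^sup>2)
      else C * cmod (lam n) powr (2 * \<delta>))" for n
  show ?thesis
  proof (rule weighted_integral_norm_resolvent_diag_op_tendsto_0[OF R B d(1) gap])
    show "(Lambda (\<delta> / \<alpha>) \<longlongrightarrow> 0) (at_right 1)"
      using \<delta> A1 by (intro Lambda_tendsto_0) (auto simp: field_simps)
    show "0 \<le> Lambda (\<delta> / \<alpha>) r" for r by (rule Lambda_nonneg)
    show "Lambda (\<delta> / \<alpha>) r * circle_bound r (cmod (G n)) \<le> D n" if r: "1 < r" "r < 1 + d" for r n
    proof -
      have r': "r - 1 < exp (-1)" using r d by simp
      show ?thesis
      proof (cases "n \<in> F")
        case True
        have "Lambda (\<delta> / \<alpha>) r * circle_bound r (cmod (G n)) \<le> 1 * D n"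
          using True Lambda_nonneg Lambda_le_one[OF r(1) r'] circle_bound_le_gap(1)[OF norm_ge_zero d(1) gap r]
            circle_bound_nonneg[OF norm_ge_zero r(1)]
          by (intro mult_mono) (auto simp: D_def)
        thus ?thesis by simp
      next
        case False
        thus ?thesis using C[of "lam n", OF _ r(1) r'] by (auto simp: D_def F_def G)
      qed
    qed
    have "summable (\<lambda>n. C * (cmod (lam n) powr (2 * \<delta>) * (cmod (cinner x (\<Psi> n)))\<^sup>2) +
        (if n \<in> F then (cmod (cinner x (\<Psi> n)))\<^sup>2 * (D n - C * cmod (lam n) powr (2 * \<delta>)) else 0))"
      using A1(4) unfolding F_def[symmetric] by (intro summable_add summable_mult x summable_If_finite_set)
    thus "summable (\<lambda>n. (cmod (cinner x (\<Psi> n)))\<^sup>2 * D n)"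
      by (rule summable_cong[THEN iffD1, rotated]) (auto simp: D_def algebra_simps)
  qed
qed

theorem mainTheorem12:
  fixes lam :: "nat \<Rightarrow> complex" and \<phi> \<psi> :: "nat \<Rightarrow> 'a::chilbert"
    and \<omega> \<alpha> \<Upsilon> \<tau> :: real
  assumes RS: "riesz_spectral lam \<phi> \<psi>"
    and A1: "\<omega> > 0" "\<alpha> > 0" "\<Upsilon> > 0"
            "finite {n. Re (lam n) > - \<omega> \<and> lam n \<notin> Omega \<alpha> \<Upsilon>}"
    and A2: "\<forall>n. Re (lam n) \<noteq> 0"
    and tau: "\<tau> > 0"
  shows
    "(\<forall>x y. ((\<lambda>r. (r - 1) * integral {0..2*pi}
              (\<lambda>\<theta>. (norm (resolvent (complex_of_real r * exp (\<i> * complex_of_real \<theta>))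
                                    (rs_semigroup lam \<phi> \<psi> \<tau>) x))\<^sup>2)) \<longlongrightarrow> 0) (at_right 1) \<and>
            ((\<lambda>r. (r - 1) * integral {0..2*pi}
              (\<lambda>\<theta>. (norm (resolvent (complex_of_real r * exp (\<i> * complex_of_real \<theta>))
                                    (hadjoint (rs_semigroup lam \<phi> \<psi> \<tau>)) y))\<^sup>2)) \<longlongrightarrow> 0) (at_right 1))
     \<and>
     (\<forall>\<delta>. 0 < \<delta> \<and> \<delta> \<le> \<alpha> / 2 \<longrightarrow>
        (\<forall>x \<in> Dom_pow \<delta> lam \<psi>. ((\<lambda>r. Lambda (\<delta> / \<alpha>) r * integral {0..2*pi}
              (\<lambda>\<theta>. (norm (resolvent (complex_of_real r * exp (\<i> * complex_of_real \<theta>))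
                                    (rs_semigroup lam \<phi> \<psi> \<tau>) x))\<^sup>2)) \<longlongrightarrow> 0) (at_right 1)) \<and>
        (\<forall>y \<in> Dom_pow \<delta> lam \<phi>. ((\<lambda>r. Lambda (\<delta> / \<alpha>) r * integral {0..2*pi}
              (\<lambda>\<theta>. (norm (resolvent (complex_of_real r * exp (\<i> * complex_of_real \<theta>))
                                    (hadjoint (rs_semigroup lam \<phi> \<psi> \<tau>)) y))\<^sup>2)) \<longlongrightarrow> 0) (at_right 1)))"
proof -
  obtain m M where R: "riesz_system \<phi> \<psi> m M"
    using riesz_basis_riesz_system RS unfolding riesz_spectral_def by blast
  note R' = riesz_system_dual[OF R]
  define g where "g n = exp (complex_of_real \<tau> * lam n)" for n
  obtain d B where d: "0 < d" "d \<le> exp (-1) / 2" and bounds: "\<And>n. exp (\<tau> * Re (lam n)) \<le> B"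
    and gaps: "\<And>n. exp (\<tau> * Re (lam n)) < 1 \<or> 1 + 2 * d \<le> exp (\<tau> * Re (lam n))"
    using exp_spectrum_gap[OF A1(4) A1(1) A1(3) A2 tau] by blast
  have norm_g: "cmod (g n) = exp (\<tau> * Re (lam n))" "cmod (cnj (g n)) = exp (\<tau> * Re (lam n))" for n
    by (simp_all add: g_def)
  have d_half: "d \<le> 1/2" using d(2) exp_le_one_iff[of "-1::real"] by linarith
  have B: "cmod (g n) \<le> B" "cmod (cnj (g n)) \<le> B"
    and gap: "cmod (g n) < 1 \<or> 1 + 2 * d \<le> cmod (g n)" "cmod (cnj (g n)) < 1 \<or> 1 + 2 * d \<le> cmod (cnj (g n))"
    for n using bounds[of n] gaps[of n] by (simp_all only: norm_g)
  have T: "rs_semigroup lam \<phi> \<psi> \<tau> = diag_op g \<phi> \<psi>"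
    by (simp add: rs_semigroup_eq_diag_op g_def[abs_def])
  have T_adj: "hadjoint (diag_op g \<phi> \<psi>) = diag_op (\<lambda>n. cnj (g n)) \<psi> \<phi>"
    by (rule hadjoint_diag_op[OF R R' B(1)])
  note shifted = diag_op_shifted_resolvent_tendsto_0[OF _ _ d(1) d_half]
  note weighted = diag_op_Lambda_resolvent_tendsto_0[OF _ _ d _ _ A1(1-4) tau]
  show ?thesis
    unfolding T T_adj Dom_pow_def
    by (auto intro!: shifted[OF R B(1) gap(1)] shifted[OF R' B(2) gap(2)]
        weighted[OF R B(1) gap(1) norm_g(1)] weighted[OF R' B(2) gap(2) norm_g(2)])
qed

end
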